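(* Let $K\ge1$, $L\ge K$, $m\ge1$. Let $\mathcal G_{\mathrm{train}}$ be a finite set of training pairs $(G,\Gamma^K(G))$ with $M$ total reachable nodes, containing the pairs $(H^{(0)}_K,\Gamma^K(H^{(0)}_K))$ and $(P^{(0)}_1(1),\Gamma^K(P^{(0)}_1(1)))$. Let $0<\eta<\frac{1}{2M(mL+mK+K)}$ and $0\le\epsilon<\eta$, and consider $L$-layer MinAgg GNNs $\mathcal A_\theta$ with $m$-layer MLPs. Then the minimum of $\mathcal L_{\mathrm{reg}}(\theta)=\mathcal L_{\mathrm{MAE}}(\mathcal G_{\mathrm{train}},\mathcal A_\theta)+\eta\|\theta\|_0$ over all $\theta$ equals $\eta(mL+mK+K)$. Moreover, if $\mathcal L_{\mathrm{reg}}(\theta)\le\eta(mL+mK+K)+\epsilon$, then: $\theta$ has exactly $mL+mK+K$ nonzero entries; $\mathcal A_\theta$ has exactly $K$ message passing layers $\ell_1<\dots<\ell_K$, each of them edge-dependent; every $f^{\mathrm{up},(\ell)}$ is non-constant; all bias vectors $b^{\mathrm{up},(\ell)}_j,b^{\mathrm{agg},(\ell)}_j$ are zero; $\|W^{\mathrm{up},(\ell)}_j\|_0=1$ for all $j\in[m]$, $\ell\in[L]$; and for each message passing layer $\ell_k$, $\|W^{\mathrm{agg},(\ell_k)}_1\|_0=2$ with both nonzero entries in the same row, and $\|W^{\mathrm{agg},(\ell_k)}_j\|_0=1$ for $2\le j\le m$.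
   Context: Attributed graphs: $G=(V,E,X_{\mathrm v},X_{\mathrm e})$, $V$ finite, undirected edges, nonnegative edge weights and nonnegative node features; self-loop of weight $0$ at each node; $\mathcal N(v)=\{v\}\cup\{u:\{u,v\}\in E\}$. A large constant $\beta>0$ encodes "infinite distance". $x_v(H)$ is the feature of $v$ in $H$. $\Gamma$ sends $G$ to the graph with the same vertices, edges and weights and features $x'_v=\min\{x_u+x_{(u,v)}:u\in\mathcal N(v)\}$; $\Gamma^K$ is its $K$-fold iterate. For a source $s$, $\mathrm d^{(t)}(s,v)$ is the minimal weight of a walk from $s$ to $v$ with at most $t$ edges ($\beta$ if none); a $t$-step BF instance is a graph with features $x_v=\mathrm d^{(t)}(s,v)$ for a designated source $s$. $P^{(t)}_k(a_1,\dots,a_k)$: path $v_0,\dots,v_k$, edge $\{v_{i-1},v_i\}$ of weight $a_i$, features $x_{v_i}=\mathrm d^{(t)}(v_0,v_i)$. $H^{(0)}_K$: vertices $v_0,\dots,v_K,u_0,\dots,u_K$; edges $\{v_{i-1},v_i\},\{u_{i-1},u_i\}$ (weight $0$) and $\{u_{i-1},v_i\},\{v_{i-1},u_i\}$ (weight $1$), $i\in[K]$; features $x_{v_0}=0$, $x_w=\beta$ otherwise. MinAgg GNN $\mathcal A_\theta$ ($L$ layers, hidden dimension $d$, $m$-layer MLPs): for $\ell\in[L]$, $m$-layer ReLU MLPs $f^{\mathrm{agg},(\ell)}:\mathbb R^{d_{\ell-1}+1}\to\mathbb R^d$ with parameters $(W^{\mathrm{agg},(\ell)}_j,b^{\mathrm{agg},(\ell)}_j)_{j\in[m]}$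 and $f^{\mathrm{up},(\ell)}:\mathbb R^{d+d_{\ell-1}}\to\mathbb R^{d_\ell}$ with parameters $(W^{\mathrm{up},(\ell)}_j,b^{\mathrm{up},(\ell)}_j)_{j\in[m]}$, each computing $x^{(j)}=\sigma(W_jx^{(j-1)}+b_j)$ with componentwise ReLU $\sigma$; $d_0=d_L=1$, $d_\ell=d$ otherwise. $h^{(0)}_v=x_v$, $h^{(\ell)}_v=f^{\mathrm{up},(\ell)}\big(\min_{u\in\mathcal N(v)}f^{\mathrm{agg},(\ell)}(h^{(\ell-1)}_u\oplus x_{(u,v)})\oplus h^{(\ell-1)}_v\big)$ (coordinatewise min, $\oplus$ concatenation). $\theta$ is the collection of all these parameters and $\|\theta\|_0$ the number of nonzero entries; $\|W\|_0$ is the number of nonzero entries of a matrix. Dependence: a function $f$ on $\mathbb R^n_{\ge0}$ depends on a set $S$ of coordinates if some $x\ne y$ in $\mathbb R^n_{\ge0}$ agreeing outside $S$ have $f(x)\ne f(y)$; "constant" means constant on $\mathbb R^n_{\ge0}$. Node component of $f^{\mathrm{agg},(\ell)}$: first $d_{\ell-1}$ input coordinates; edge component: the last. Layer $\ell$ is message passing if $f^{\mathrm{agg},(\ell)}$ depends on its node component, edge-dependent message passing if it also depends on its edge component. Loss: a training set $\mathcal G_{\mathrm{train}}$ is a finite set of pairs $(G,\Gamma^K(G))$ with $G$ a BF instance; $V^*(G)=\{v: x_v(\Gamma^K(G))\ne\beta\}$ (nodes reachable from the source within the target), $M=\sum_{(G,\cdot)\in\mathcal G_{\mathrm{train}}}|V^*(G)|$,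 and $\mathcal L_{\mathrm{MAE}}(\mathcal G_{\mathrm{train}},\mathcal A_\theta)=\frac1M\sum_{G}\sum_{v\in V^*(G)}|x_v(\Gamma^K(G))-h^{(L)}_v(G)|$. *)

theory Defs
  imports "HOL-Analysis.Analysis"
begin

text \<open>Every node additionally carries an
  implicit self-loop of weight 0 (see nbhd and ef).\<close>

record wgraph =
  verts :: "nat set"
  adj   :: "nat \<Rightarrow> nat \<Rightarrow> bool"
  wt    :: "nat \<Rightarrow> nat \<Rightarrow> real"
  feat  :: "nat \<Rightarrow> real"

definition wf_graph :: "wgraph \<Rightarrow> bool" where
  "wf_graph G \<longleftrightarrow> finite (verts G)
     \<and> (\<forall>u v. adj G u v \<longrightarrow> u \<in> verts G \<and> v \<in> verts G)
     \<and> (\<forall>u v. adj G u v \<longrightarrow> adj G v u)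
     \<and> (\<forall>v. \<not> adj G v v)
     \<and> (\<forall>u v. adj G u v \<longrightarrow> wt G u v = wt G v u \<and> wt G u v \<ge> 0)
     \<and> (\<forall>v\<in>verts G. feat G v \<ge> 0)"

definition nbhd :: "wgraph \<Rightarrow> nat \<Rightarrow> nat set" where
  "nbhd G v = insert v {u. adj G u v}"

definition ef :: "wgraph \<Rightarrow> nat \<Rightarrow> nat \<Rightarrow> real" where
  "ef G u v = (if u = v then 0 else wt G u v)"

definition Gamma :: "wgraph \<Rightarrow> wgraph" where
  "Gamma G = G\<lparr>feat := (\<lambda>v. Min ((\<lambda>u. feat G u + ef G u v) ` nbhd G v))\<rparr>"

definition is_walk :: "wgraph \<Rightarrow> nat list \<Rightarrow> bool" where
  "is_walk G xs \<longleftrightarrow> xs \<noteq> [] \<and> set xs \<subseteq> verts G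
     \<and> (\<forall>i. Suc i < length xs \<longrightarrow> adj G (xs ! i) (xs ! Suc i))"

definition walk_wt :: "wgraph \<Rightarrow> nat list \<Rightarrow> real" where
  "walk_wt G xs = (\<Sum>i < length xs - 1. wt G (xs ! i) (xs ! Suc i))"

text \<open>d^(t)(s,v): minimal weight of a walk from s to v with at most t edges
  (i.e. at most t+1 vertices); beta if there is none.\<close>
definition tdist :: "real \<Rightarrow> wgraph \<Rightarrow> nat \<Rightarrow> nat \<Rightarrow> nat \<Rightarrow> real" where
  "tdist \<beta> G t s v =
     (if \<exists>xs. is_walk G xs \<and> hd xs = s \<and> last xs = v \<and> length xs \<le> Suc t
      then Min {walk_wt G xs | xs. is_walk G xs \<and> hd xs = s \<and> last xs = v \<and> length xs \<le> Suc t}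
      else \<beta>)"

definition bf_instance :: "real \<Rightarrow> wgraph \<Rightarrow> bool" where
  "bf_instance \<beta> G \<longleftrightarrow> wf_graph G \<and>
     (\<exists>s\<in>verts G. \<exists>t. \<forall>v\<in>verts G. feat G v = tdist \<beta> G t s v)"

definition graph_iso :: "wgraph \<Rightarrow> wgraph \<Rightarrow> bool" where
  "graph_iso G H \<longleftrightarrow> (\<exists>f. bij_betw f (verts G) (verts H)
     \<and> (\<forall>u\<in>verts G. \<forall>v\<in>verts G. adj G u v \<longleftrightarrow> adj H (f u) (f v))
     \<and> (\<forall>u\<in>verts G. \<forall>v\<in>verts G. adj G u v \<longrightarrow> wt G u v = wt H (f u) (f v))
     \<and> (\<forall>v\<in>verts G. feat G v = feat H (f v)))"

text \<open>P^(t)_k(a_1,...,a_k): path v_0,...,v_k (vertex v_i is the number i), edge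
  {v_(i-1),v_i} of weight a_i, features d^(t)(v_0,v_i).\<close>
definition path_skel :: "real list \<Rightarrow> wgraph" where
  "path_skel as = \<lparr> verts = {0..length as},
     adj = (\<lambda>a b. a \<le> length as \<and> b \<le> length as \<and> (a = Suc b \<or> b = Suc a)),
     wt = (\<lambda>a b. as ! (min a b)),
     feat = (\<lambda>_. 0) \<rparr>"

definition path_graph :: "real \<Rightarrow> nat \<Rightarrow> real list \<Rightarrow> wgraph" where
  "path_graph \<beta> t as = (path_skel as)\<lparr>feat := (\<lambda>v. tdist \<beta> (path_skel as) t 0 v)\<rparr>"

text \<open>H^(0)_K: v_i is the number i and u_i is the number K+1+i (0 \<le> i \<le> K).\<close>
definition H_idx :: "nat \<Rightarrow> nat \<Rightarrow> nat" where
  "H_idx K a = (if a \<le> K then a else a - Suc K)"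

definition H_graph :: "nat \<Rightarrow> real \<Rightarrow> wgraph" where
  "H_graph K \<beta> = \<lparr> verts = {0..2*K+1},
     adj = (\<lambda>a b. a \<le> 2*K+1 \<and> b \<le> 2*K+1 \<and> (H_idx K a = Suc (H_idx K b) \<or> H_idx K b = Suc (H_idx K a))),
     wt = (\<lambda>a b. if (a \<le> K \<longleftrightarrow> b \<le> K) then 0 else 1),
     feat = (\<lambda>a. if a = 0 then 0 else \<beta>) \<rparr>"

text \<open>Vectors are functions nat \<Rightarrow> real (only the first n coordinates are meaningful,
  the others are kept 0); matrices are functions nat \<Rightarrow> nat \<Rightarrow> real, of which only the
  r x c block is used.\<close>

definition relu_layer :: "nat \<Rightarrow> nat \<Rightarrow> (nat \<Rightarrow> nat \<Rightarrow> real) \<Rightarrow> (nat \<Rightarrow> real) \<Rightarrow> (nat \<Rightarrow> real) \<Rightarrow> nat \<Rightarrow> real" where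
  "relu_layer r c W b x = (\<lambda>i. if i < r then max 0 ((\<Sum>k<c. W i k * x k) + b i) else 0)"

text \<open>MLP with layer widths w 0 (input), w 1, ..., w j; W j and b j are the
  parameters of layer j.\<close>
primrec mlp :: "(nat \<Rightarrow> nat) \<Rightarrow> (nat \<Rightarrow> nat \<Rightarrow> nat \<Rightarrow> real) \<Rightarrow> (nat \<Rightarrow> nat \<Rightarrow> real) \<Rightarrow> nat \<Rightarrow> (nat \<Rightarrow> real) \<Rightarrow> nat \<Rightarrow> real" where
  "mlp w W b 0 x = x"
| "mlp w W b (Suc j) x = relu_layer (w (Suc j)) (w j) (W (Suc j)) (b (Suc j)) (mlp w W b j x)"

definition vconcat :: "nat \<Rightarrow> (nat \<Rightarrow> real) \<Rightarrow> (nat \<Rightarrow> real) \<Rightarrow> nat \<Rightarrow> real" where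
  "vconcat n x y = (\<lambda>i. if i < n then x i else y (i - n))"

text \<open>Parameters theta: Wagg l j is W^(agg,(l))_j (entry i k = row i, column k),
  bagg l j is b^(agg,(l))_j, and similarly for the update MLPs.\<close>
record gnn_params =
  Wagg :: "nat \<Rightarrow> nat \<Rightarrow> nat \<Rightarrow> nat \<Rightarrow> real"
  bagg :: "nat \<Rightarrow> nat \<Rightarrow> nat \<Rightarrow> real"
  Wup  :: "nat \<Rightarrow> nat \<Rightarrow> nat \<Rightarrow> nat \<Rightarrow> real"
  bup  :: "nat \<Rightarrow> nat \<Rightarrow> nat \<Rightarrow> real"

definition dimh :: "nat \<Rightarrow> nat \<Rightarrow> nat \<Rightarrow> nat" where
  "dimh L d l = (if l = 0 \<or> l = L then 1 else d)"

definition wagg :: "nat \<Rightarrow> nat \<Rightarrow> nat \<Rightarrow> nat \<Rightarrow> nat" where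
  "wagg L d l j = (if j = 0 then dimh L d (l - 1) + 1 else d)"

definition wup :: "nat \<Rightarrow> nat \<Rightarrow> nat \<Rightarrow> nat \<Rightarrow> nat \<Rightarrow> nat" where
  "wup L d m l j = (if j = 0 then d + dimh L d (l - 1) else if j = m then dimh L d l else d)"

definition f_agg :: "nat \<Rightarrow> nat \<Rightarrow> nat \<Rightarrow> gnn_params \<Rightarrow> nat \<Rightarrow> (nat \<Rightarrow> real) \<Rightarrow> nat \<Rightarrow> real" where
  "f_agg L d m \<theta> l = mlp (wagg L d l) (Wagg \<theta> l) (bagg \<theta> l) m"

definition f_up :: "nat \<Rightarrow> nat \<Rightarrow> nat \<Rightarrow> gnn_params \<Rightarrow> nat \<Rightarrow> (nat \<Rightarrow> real) \<Rightarrow> nat \<Rightarrow> real" where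
  "f_up L d m \<theta> l = mlp (wup L d m l) (Wup \<theta> l) (bup \<theta> l) m"

primrec gnn_h :: "nat \<Rightarrow> nat \<Rightarrow> nat \<Rightarrow> gnn_params \<Rightarrow> wgraph \<Rightarrow> nat \<Rightarrow> nat \<Rightarrow> nat \<Rightarrow> real" where
  "gnn_h L d m \<theta> G 0 v = (\<lambda>i. if i = 0 then feat G v else 0)"
| "gnn_h L d m \<theta> G (Suc l) v =
     f_up L d m \<theta> (Suc l)
       (vconcat d
          (\<lambda>i. Min ((\<lambda>u. f_agg L d m \<theta> (Suc l)
                            (vconcat (dimh L d l) (gnn_h L d m \<theta> G l u)
                                     (\<lambda>k. if k = 0 then ef G u v else 0)) i) ` nbhd G v))
          (gnn_h L d m \<theta> G l v))"

definition gnn_out :: "nat \<Rightarrow> nat \<Rightarrow> nat \<Rightarrow> gnn_params \<Rightarrow> wgraph \<Rightarrow> nat \<Rightarrow> real" where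
  "gnn_out L d m \<theta> G v = gnn_h L d m \<theta> G L v 0"

definition nnz_mat :: "nat \<Rightarrow> nat \<Rightarrow> (nat \<Rightarrow> nat \<Rightarrow> real) \<Rightarrow> nat" where
  "nnz_mat r c W = card {(i, k). i < r \<and> k < c \<and> W i k \<noteq> 0}"

definition nnz_vec :: "nat \<Rightarrow> (nat \<Rightarrow> real) \<Rightarrow> nat" where
  "nnz_vec r b = card {i. i < r \<and> b i \<noteq> 0}"

definition norm0 :: "nat \<Rightarrow> nat \<Rightarrow> nat \<Rightarrow> gnn_params \<Rightarrow> nat" where
  "norm0 L d m \<theta> = (\<Sum>l\<in>{1..L}. \<Sum>j\<in>{1..m}.
       nnz_mat (wagg L d l j) (wagg L d l (j - 1)) (Wagg \<theta> l j)
     + nnz_vec (wagg L d l j) (bagg \<theta> l j)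
     + nnz_mat (wup L d m l j) (wup L d m l (j - 1)) (Wup \<theta> l j)
     + nnz_vec (wup L d m l j) (bup \<theta> l j))"

definition nonneg_vec :: "nat \<Rightarrow> (nat \<Rightarrow> real) \<Rightarrow> bool" where
  "nonneg_vec n x \<longleftrightarrow> (\<forall>i<n. x i \<ge> 0) \<and> (\<forall>i\<ge>n. x i = 0)"

definition depends_on :: "nat \<Rightarrow> ((nat \<Rightarrow> real) \<Rightarrow> (nat \<Rightarrow> real)) \<Rightarrow> nat set \<Rightarrow> bool" where
  "depends_on n f S \<longleftrightarrow> (\<exists>x y. nonneg_vec n x \<and> nonneg_vec n y \<and> x \<noteq> y
       \<and> (\<forall>i<n. i \<notin> S \<longrightarrow> x i = y i) \<and> f x \<noteq> f y)"

definition constant_on_nonneg :: "nat \<Rightarrow> ((nat \<Rightarrow> real) \<Rightarrow> (nat \<Rightarrow> real)) \<Rightarrow> bool" where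
  "constant_on_nonneg n f \<longleftrightarrow> (\<forall>x y. nonneg_vec n x \<and> nonneg_vec n y \<longrightarrow> f x = f y)"

text \<open>Layer l is message passing iff f_agg^(l) depends on its node component
  (the first d_(l-1) coordinates); edge-dependent iff it moreover depends on its
  edge component (the last coordinate).\<close>
definition msg_passing :: "nat \<Rightarrow> nat \<Rightarrow> nat \<Rightarrow> gnn_params \<Rightarrow> nat \<Rightarrow> bool" where
  "msg_passing L d m \<theta> l \<longleftrightarrow>
     depends_on (dimh L d (l - 1) + 1) (f_agg L d m \<theta> l) {..<dimh L d (l - 1)}"

definition edge_dep_msg_passing :: "nat \<Rightarrow> nat \<Rightarrow> nat \<Rightarrow> gnn_params \<Rightarrow> nat \<Rightarrow> bool" where
  "edge_dep_msg_passing L d m \<theta> l \<longleftrightarrow> msg_passing L d m \<theta> l \<and>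
     depends_on (dimh L d (l - 1) + 1) (f_agg L d m \<theta> l) {dimh L d (l - 1)}"

definition train_set :: "real \<Rightarrow> nat \<Rightarrow> (wgraph \<times> wgraph) set \<Rightarrow> bool" where
  "train_set \<beta> K T \<longleftrightarrow> finite T \<and>
     (\<forall>(G, G')\<in>T. bf_instance \<beta> G \<and> G' = (Gamma ^^ K) G)"

definition Vstar :: "real \<Rightarrow> wgraph \<Rightarrow> wgraph \<Rightarrow> nat set" where
  "Vstar \<beta> G G' = {v\<in>verts G. feat G' v \<noteq> \<beta>}"

definition Mtot :: "real \<Rightarrow> (wgraph \<times> wgraph) set \<Rightarrow> nat" where
  "Mtot \<beta> T = (\<Sum>(G, G')\<in>T. card (Vstar \<beta> G G'))"

definition loss_MAE :: "real \<Rightarrow> (wgraph \<times> wgraph) set \<Rightarrow> nat \<Rightarrow> nat \<Rightarrow> nat \<Rightarrow> gnn_params \<Rightarrow> real" where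
  "loss_MAE \<beta> T L d m \<theta> = (1 / real (Mtot \<beta> T)) *
     (\<Sum>(G, G')\<in>T. \<Sum>v\<in>Vstar \<beta> G G'. \<bar>feat G' v - gnn_out L d m \<theta> G v\<bar>)"

definition loss_reg :: "real \<Rightarrow> real \<Rightarrow> (wgraph \<times> wgraph) set \<Rightarrow> nat \<Rightarrow> nat \<Rightarrow> nat \<Rightarrow> gnn_params \<Rightarrow> real" where
  "loss_reg \<eta> \<beta> T L d m \<theta> = loss_MAE \<beta> T L d m \<theta> + \<eta> * real (norm0 L d m \<theta>)"

end

theory Submission
  imports Defs
begin

text \<open>In \<open>H\<^sub>K\<close> the twins \<open>v\<^sub>i\<close> and \<open>u\<^sub>i\<close> have the same neighbours: the pair of index \<open>i - 1\<close>
  is joined to the pair of index \<open>i\<close> by edges of weight \<open>0\<close> within each side and of weight \<open>1\<close>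
  across, and only the features of \<open>v\<^sub>0\<close> and \<open>u\<^sub>0\<close> differ. Hence a message coordinate can tell
  \<open>v\<^sub>i\<close> from \<open>u\<^sub>i\<close> only if it depends jointly on node and edge features and the twins of index
  \<open>i - 1\<close> are already told apart. By induction over the layers, the hidden states of \<open>v\<^sub>i\<close> and \<open>u\<^sub>i\<close>
  agree for all \<open>i \<ge> t\<close>, where \<open>t\<close> starts at \<open>1\<close>, grows by at most one in a layer whose update
  reads such a coordinate, and drops to \<open>0\<close> for good after a constant update. As \<open>\<Gamma>\<^sup>K(H\<^sub>K)\<close> has
  target \<open>0\<close> at \<open>v\<^sub>K\<close> and \<open>1\<close> at \<open>u\<^sub>K\<close>, a network with a constant update or with fewer than \<open>K\<close>
  such layers has error at least \<open>1/M\<close>, which exceeds the whole penalty by the choice of \<open>\<eta>\<close>.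
  Any other network has at least one nonzero weight per layer of each update MLP and, in each of
  its \<open>K\<close> joint layers, one per layer of the aggregation MLP plus a second one in its first layer,
  so \<open>\<parallel>\<theta>\<parallel>\<^sub>0 \<ge> mL + mK + K\<close>. A network simulating \<open>K\<close> Bellman--Ford steps attains this with zero
  error, and equality in each count forces the stated sparsity pattern.\<close>

section \<open>Multilayer perceptrons\<close>

lemma mlp_eq_if_eq_below:
  "mlp w W b j x = mlp w W b j y \<Longrightarrow> j \<le> n \<Longrightarrow> mlp w W b n x = mlp w W b n y"
  by (induction n) (auto simp: le_Suc_eq)

lemma mlp_nonneg: "0 < j \<Longrightarrow> 0 \<le> mlp w W b j x i"
  by (cases j) (auto simp: relu_layer_def)

lemma mlp_beyond_width: "0 < j \<Longrightarrow> w j \<le> i \<Longrightarrow> mlp w W b j x i = 0"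
  by (cases j) (auto simp: relu_layer_def)

lemma finite_index_pairs: "finite {(i, k). i < (r::nat) \<and> k < (c::nat) \<and> P i k}"
  by (rule finite_subset[of _ "{..<r} \<times> {..<c}"]) auto

lemma nnz_mat_eq_0D: "nnz_mat r c W = 0 \<Longrightarrow> i < r \<Longrightarrow> k < c \<Longrightarrow> W i k = 0"
  unfolding nnz_mat_def using finite_index_pairs[of r c "\<lambda>i k. W i k \<noteq> 0"] by auto

lemma nnz_vec_eq_0D: "nnz_vec r b = 0 \<Longrightarrow> i < r \<Longrightarrow> b i = 0"
  unfolding nnz_vec_def by auto

lemma relu_layer_cong:
  assumes "\<And>i. i < r \<Longrightarrow> (\<Sum>k<c. W i k * x k) = (\<Sum>k<c. W i k * y k)"
  shows "relu_layer r c W b x = relu_layer r c W b y"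
  using assms by (auto simp: relu_layer_def)

lemma mlp_const_if_zero_layer:
  assumes zero: "nnz_mat (w j) (w (j - 1)) (W j) = 0" and "1 \<le> j" "j \<le> n"
  shows "mlp w W b n x = mlp w W b n y"
proof -
  obtain j' where j: "j = Suc j'" using \<open>1 \<le> j\<close> by (cases j) auto
  have "mlp w W b j x = mlp w W b j y"
    unfolding j mlp.simps
    by (rule relu_layer_cong) (simp add: nnz_mat_eq_0D[OF zero[unfolded j]])
  then show ?thesis using mlp_eq_if_eq_below \<open>j \<le> n\<close> by blast
qed

lemma nnz_mat_pos_if_mlp_nonconst:
  assumes "mlp w W b n x \<noteq> mlp w W b n y" "j \<in> {1..n}"
  shows "1 \<le> nnz_mat (w j) (w (j - 1)) (W j)"
  using mlp_const_if_zero_layer[of w j W n b x y] assms by fastforce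

lemma nnz_mat_le_1_single_column:
  assumes "nnz_mat r c W \<le> 1"
  obtains k0 where "\<And>i k. i < r \<Longrightarrow> k < c \<Longrightarrow> W i k \<noteq> 0 \<Longrightarrow> k = k0"
proof -
  let ?S = "{(i, k). i < r \<and> k < c \<and> W i k \<noteq> 0}"
  have "\<forall>s\<in>?S. \<forall>s'\<in>?S. s = s'"
    using assms card_le_Suc0_iff_eq[OF finite_index_pairs] unfolding nnz_mat_def by auto
  then show ?thesis
    using that by (cases "?S = {}") fastforce+
qed

lemma mlp_Suc_factors_through_column:
  assumes "nnz_mat (w (Suc j)) (w j) (W (Suc j)) \<le> 1"
  shows "\<exists>k0. \<forall>x y. mlp w W b j x k0 = mlp w W b j y k0 \<longrightarrow> mlp w W b (Suc j) x = mlp w W b (Suc j) y"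
proof -
  obtain k0 where k0: "\<And>i k. i < w (Suc j) \<Longrightarrow> k < w j \<Longrightarrow> W (Suc j) i k \<noteq> 0 \<Longrightarrow> k = k0"
    using nnz_mat_le_1_single_column[OF assms] by blast
  have "mlp w W b (Suc j) x = mlp w W b (Suc j) y" if "mlp w W b j x k0 = mlp w W b j y k0" for x y
    unfolding mlp.simps
  proof (rule relu_layer_cong, rule sum.cong)
    fix i k assume "i < w (Suc j)" "k \<in> {..<w j}"
    then show "W (Suc j) i k * mlp w W b j x k = W (Suc j) i k * mlp w W b j y k"
      using k0 that by (cases "k = k0") auto
  qed simp
  then show ?thesis by blast
qed

section \<open>The Bellman--Ford operator and graph isomorphisms\<close>

lemma Gamma_pow_keeps_graph:
  "verts ((Gamma^^j) G) = verts G" "adj ((Gamma^^j) G) = adj G" "wt ((Gamma^^j) G) = wt G"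
  by (induction j) (simp_all add: Gamma_def)

lemma feat_Gamma_Suc:
  "feat ((Gamma^^Suc j) G) v = Min ((\<lambda>u. feat ((Gamma^^j) G) u + ef G u v) ` nbhd G v)"
proof -
  have "nbhd ((Gamma^^j) G) = nbhd G" "ef ((Gamma^^j) G) = ef G"
    by (simp_all add: nbhd_def ef_def Gamma_pow_keeps_graph fun_eq_iff)
  then show ?thesis by (simp add: Gamma_def)
qed

lemma feat_Gamma_Suc_le:
  "finite (nbhd G v) \<Longrightarrow> u \<in> nbhd G v \<Longrightarrow> feat ((Gamma^^Suc j) G) v \<le> feat ((Gamma^^j) G) u + ef G u v"
  unfolding feat_Gamma_Suc by (rule Min_le) auto

lemma feat_Gamma_Suc_ge:
  assumes "finite (nbhd G v)" "\<And>u. u \<in> nbhd G v \<Longrightarrow> c \<le> feat ((Gamma^^j) G) u + ef G u v"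
  shows "c \<le> feat ((Gamma^^Suc j) G) v"
  unfolding feat_Gamma_Suc using assms by (subst Min_ge_iff) (auto simp: nbhd_def)

lemma finite_nbhd: "wf_graph G \<Longrightarrow> finite (nbhd G v)"
  by (rule finite_subset[of _ "insert v (verts G)"]) (auto simp: nbhd_def wf_graph_def)

lemma ef_nonneg: "wf_graph G \<Longrightarrow> u \<in> nbhd G v \<Longrightarrow> 0 \<le> ef G u v"
  by (auto simp: ef_def wf_graph_def nbhd_def)

definition adj_in_verts :: "wgraph \<Rightarrow> bool" where
  "adj_in_verts G \<longleftrightarrow> (\<forall>u v. adj G u v \<longrightarrow> u \<in> verts G \<and> v \<in> verts G)"

lemma wf_graph_adj_in_verts: "wf_graph G \<Longrightarrow> adj_in_verts G"
  by (simp add: wf_graph_def adj_in_verts_def)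

lemma nbhd_subset_verts: "adj_in_verts G \<Longrightarrow> x \<in> verts G \<Longrightarrow> nbhd G x \<subseteq> verts G"
  by (auto simp: adj_in_verts_def nbhd_def)

lemma Gamma_pow_nonneg: "wf_graph G \<Longrightarrow> v \<in> verts G \<Longrightarrow> 0 \<le> feat ((Gamma^^j) G) v"
proof (induction j arbitrary: v)
  case 0 then show ?case by (simp add: wf_graph_def)
next
  case (Suc j)
  show ?case
    using Suc.IH[OF Suc.prems(1)] nbhd_subset_verts[OF wf_graph_adj_in_verts[OF Suc.prems(1)] Suc.prems(2)]
      ef_nonneg[OF Suc.prems(1)]
    by (intro feat_Gamma_Suc_ge[OF finite_nbhd[OF Suc.prems(1)]] add_nonneg_nonneg) auto
qed

definition iso_map :: "(nat \<Rightarrow> nat) \<Rightarrow> wgraph \<Rightarrow> wgraph \<Rightarrow> bool" where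
  "iso_map f G H \<longleftrightarrow> bij_betw f (verts G) (verts H)
     \<and> (\<forall>u\<in>verts G. \<forall>v\<in>verts G. adj G u v \<longleftrightarrow> adj H (f u) (f v))
     \<and> (\<forall>u\<in>verts G. \<forall>v\<in>verts G. adj G u v \<longrightarrow> wt G u v = wt H (f u) (f v))
     \<and> (\<forall>v\<in>verts G. feat G v = feat H (f v))"

lemma graph_iso_iff_iso_map: "graph_iso G H \<longleftrightarrow> (\<exists>f. iso_map f G H)"
  unfolding graph_iso_def iso_map_def by blast

lemma nbhd_iso_map:
  assumes f: "iso_map f G H" and "adj_in_verts G" "adj_in_verts H" and x: "x \<in> verts G"
  shows "nbhd H (f x) = f ` nbhd G x"
proof
  show "f ` nbhd G x \<subseteq> nbhd H (f x)"
    using f x nbhd_subset_verts[OF \<open>adj_in_verts G\<close> x] by (auto simp: nbhd_def iso_map_def)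
next
  have bij: "bij_betw f (verts G) (verts H)" using f by (simp add: iso_map_def)
  show "nbhd H (f x) \<subseteq> f ` nbhd G x"
  proof
    fix w assume w: "w \<in> nbhd H (f x)"
    then have "w \<in> verts H"
      using nbhd_subset_verts[OF \<open>adj_in_verts H\<close>] x bij bij_betwE by blast
    then obtain u where u: "u \<in> verts G" "w = f u"
      using bij_betw_imp_surj_on[OF bij] by auto
    then show "w \<in> f ` nbhd G x"
      using w f x by (cases "u = x") (auto simp: nbhd_def iso_map_def)
  qed
qed

lemma ef_iso_map:
  assumes f: "iso_map f G H" and "adj_in_verts G" "x \<in> verts G" "u \<in> nbhd G x"
  shows "ef G u x = ef H (f u) (f x)"
proof (cases "u = x")
  case False
  have u: "u \<in> verts G" using nbhd_subset_verts assms by blast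
  then have "f u \<noteq> f x"
    using False f \<open>x \<in> verts G\<close> unfolding iso_map_def bij_betw_def inj_on_def by blast
  then show ?thesis
    using False u assms by (auto simp: ef_def iso_map_def nbhd_def)
qed (simp add: ef_def)

lemma gnn_h_iso_map:
  assumes f: "iso_map f G H" and "adj_in_verts G" "adj_in_verts H"
  shows "x \<in> verts G \<Longrightarrow> gnn_h L d m \<theta> G l x = gnn_h L d m \<theta> H l (f x)"
proof (induction l arbitrary: x)
  case 0 then show ?case using f by (auto simp: iso_map_def)
next
  case (Suc l)
  have "(\<lambda>u. f_agg L d m \<theta> (Suc l) (vconcat (dimh L d l) (gnn_h L d m \<theta> G l u)
                 (\<lambda>k. if k = 0 then ef G u x else 0)) i) ` nbhd G x
      = (\<lambda>u. f_agg L d m \<theta> (Suc l) (vconcat (dimh L d l) (gnn_h L d m \<theta> H l u)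
                 (\<lambda>k. if k = 0 then ef H u (f x) else 0)) i) ` nbhd H (f x)" for i
    unfolding nbhd_iso_map[OF assms Suc.prems] image_image
  proof (rule image_cong[OF refl])
    fix u assume u: "u \<in> nbhd G x"
    then have "u \<in> verts G" using nbhd_subset_verts[OF assms(2) Suc.prems] by blast
    then show "f_agg L d m \<theta> (Suc l) (vconcat (dimh L d l) (gnn_h L d m \<theta> G l u)
                 (\<lambda>k. if k = 0 then ef G u x else 0)) i
        = f_agg L d m \<theta> (Suc l) (vconcat (dimh L d l) (gnn_h L d m \<theta> H l (f u))
                 (\<lambda>k. if k = 0 then ef H (f u) (f x) else 0)) i"
      by (simp only: Suc.IH ef_iso_map[OF f assms(2) Suc.prems u])
  qed
  then show ?case by (simp only: gnn_h.simps Suc.IH[OF Suc.prems])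
qed

lemma Gamma_pow_iso_map:
  assumes f: "iso_map f G H" and "adj_in_verts G" "adj_in_verts H"
  shows "x \<in> verts G \<Longrightarrow> feat ((Gamma^^j) G) x = feat ((Gamma^^j) H) (f x)"
proof (induction j arbitrary: x)
  case 0 then show ?case using f by (auto simp: iso_map_def)
next
  case (Suc j)
  have "(\<lambda>u. feat ((Gamma^^j) G) u + ef G u x) ` nbhd G x
      = (\<lambda>u. feat ((Gamma^^j) H) u + ef H u (f x)) ` nbhd H (f x)"
    unfolding nbhd_iso_map[OF assms Suc.prems] image_image
  proof (rule image_cong[OF refl])
    fix u assume u: "u \<in> nbhd G x"
    then have "u \<in> verts G" using nbhd_subset_verts[OF assms(2) Suc.prems] by blast
    then show "feat ((Gamma^^j) G) u + ef G u x = feat ((Gamma^^j) H) (f u) + ef H (f u) (f x)"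
      by (simp only: Suc.IH ef_iso_map[OF f assms(2) Suc.prems u])
  qed
  then show ?case by (simp only: feat_Gamma_Suc)
qed

section \<open>The graph \<open>H\<^sub>K\<close>\<close>

definition twin :: "nat \<Rightarrow> nat \<Rightarrow> nat" where
  "twin K a = (if a \<le> K then a + Suc K else a - Suc K)"

lemma H_graph_simps:
  "verts (H_graph K \<beta>) = {0..2*K+1}"
  "adj (H_graph K \<beta>) a b \<longleftrightarrow> a \<le> 2*K+1 \<and> b \<le> 2*K+1 \<and> (H_idx K a = Suc (H_idx K b) \<or> H_idx K b = Suc (H_idx K a))"
  "wt (H_graph K \<beta>) a b = (if (a \<le> K \<longleftrightarrow> b \<le> K) then 0 else 1)"
  "feat (H_graph K \<beta>) a = (if a = 0 then 0 else \<beta>)"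
  by (simp_all add: H_graph_def)

lemma twin_simps:
  assumes "a \<le> 2*K+1"
  shows "twin K a \<le> 2*K+1" "twin K (twin K a) = a" "H_idx K (twin K a) = H_idx K a"
    "twin K a \<le> K \<longleftrightarrow> \<not> a \<le> K" "H_idx K a \<le> K"
  using assms by (auto simp: twin_def H_idx_def)

lemma twin_inj: "a \<le> 2*K+1 \<Longrightarrow> b \<le> 2*K+1 \<Longrightarrow> twin K a = twin K b \<longleftrightarrow> a = b"
  by (metis twin_simps(2))

lemma adj_in_verts_H: "adj_in_verts (H_graph K \<beta>)"
  by (auto simp: adj_in_verts_def H_graph_simps)

lemma finite_nbhd_H: "finite (nbhd (H_graph K \<beta>) a)"
  by (rule finite_subset[of _ "insert a {0..2*K+1}"]) (auto simp: nbhd_def H_graph_simps)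

lemma nbhd_H_bounds:
  "u \<in> nbhd (H_graph K \<beta>) a \<Longrightarrow> a \<le> 2*K+1 \<Longrightarrow> u \<le> 2*K+1 \<and> H_idx K a \<le> Suc (H_idx K u)"
  by (auto simp: nbhd_def H_graph_simps)

lemma adj_H_twin:
  "a \<le> 2*K+1 \<Longrightarrow> b \<le> 2*K+1 \<Longrightarrow> adj (H_graph K \<beta>) (twin K a) (twin K b) = adj (H_graph K \<beta>) a b"
  "a \<le> 2*K+1 \<Longrightarrow> adj (H_graph K \<beta>) u (twin K a) = adj (H_graph K \<beta>) u a"
  using twin_simps[of a K] twin_simps[of b K] by (simp_all add: H_graph_simps)

lemma ef_H_twin:
  "a \<le> 2*K+1 \<Longrightarrow> b \<le> 2*K+1 \<Longrightarrow> ef (H_graph K \<beta>) (twin K a) (twin K b) = ef (H_graph K \<beta>) a b"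
  using twin_simps[of a K] twin_simps[of b K] twin_inj[of a K b] by (auto simp: H_graph_simps ef_def)

lemma ef_H_nonneg: "0 \<le> ef (H_graph K \<beta>) u v"
  by (simp add: ef_def H_graph_simps)

lemma nbhd_H_twin:
  assumes a: "a \<le> 2*K+1"
  shows "nbhd (H_graph K \<beta>) (twin K a) = twin K ` nbhd (H_graph K \<beta>) a"
proof
  show "twin K ` nbhd (H_graph K \<beta>) a \<subseteq> nbhd (H_graph K \<beta>) (twin K a)"
    using nbhd_H_bounds[OF _ a] adj_H_twin(1)[OF _ a] by (fastforce simp: nbhd_def)
next
  show "nbhd (H_graph K \<beta>) (twin K a) \<subseteq> twin K ` nbhd (H_graph K \<beta>) a"
  proof
    fix w assume w: "w \<in> nbhd (H_graph K \<beta>) (twin K a)"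
    have wl: "w \<le> 2*K+1" using nbhd_H_bounds[OF w twin_simps(1)[OF a]] by simp
    have ww: "w = twin K (twin K w)" using twin_simps(2)[OF wl] by simp
    have "twin K w \<in> nbhd (H_graph K \<beta>) a"
    proof (cases "w = twin K a")
      case True then show ?thesis using twin_simps(2)[OF a] by (simp add: nbhd_def)
    next
      case False
      then have "adj (H_graph K \<beta>) (twin K (twin K w)) (twin K a)" using w ww by (simp add: nbhd_def)
      then show ?thesis using adj_H_twin(1)[OF twin_simps(1)[OF wl] a] by (simp add: nbhd_def)
    qed
    then show "w \<in> twin K ` nbhd (H_graph K \<beta>) a" using ww by blast
  qed
qed

section \<open>Bellman--Ford on \<open>H\<^sub>K\<close>\<close>

lemma Gamma_H_lower:
  assumes "1 \<le> \<beta>" "a \<le> 2*K+1"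
  shows "(if a \<le> K then 0 else 1) \<le> feat ((Gamma^^j) (H_graph K \<beta>)) a"
  using assms(2)
proof (induction j arbitrary: a)
  case 0 then show ?case using assms(1) by (simp add: H_graph_simps)
next
  case (Suc j)
  show ?case
  proof (rule feat_Gamma_Suc_ge[OF finite_nbhd_H])
    fix u assume u: "u \<in> nbhd (H_graph K \<beta>) a"
    have "u \<le> 2*K+1" using nbhd_H_bounds[OF u Suc.prems] by simp
    from Suc.IH[OF this] Suc.IH[OF Suc.prems] ef_H_nonneg[of K \<beta> u a]
    show "(if a \<le> K then 0 else 1) \<le> feat ((Gamma^^j) (H_graph K \<beta>)) u + ef (H_graph K \<beta>) u a"
      by (cases "u = a") (auto simp: ef_def H_graph_simps split: if_splits)
  qed
qed

lemma Gamma_H_v_side: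
  assumes "1 \<le> \<beta>" "a \<le> K" "a \<le> j"
  shows "feat ((Gamma^^j) (H_graph K \<beta>)) a = 0"
  using assms(2,3)
proof (induction j arbitrary: a)
  case 0 then show ?case by (simp add: H_graph_simps)
next
  case (Suc j)
  obtain u where u: "u \<in> nbhd (H_graph K \<beta>) a" "u \<le> K" "u \<le> j" "ef (H_graph K \<beta>) u a = 0"
  proof (cases "a = 0")
    case True then show ?thesis using that[of 0] by (simp add: nbhd_def ef_def)
  next
    case False
    then show ?thesis
      using that[of "a - 1"] Suc.prems by (simp add: nbhd_def ef_def H_graph_simps H_idx_def)
  qed
  have "feat ((Gamma^^Suc j) (H_graph K \<beta>)) a \<le> 0"
    using feat_Gamma_Suc_le[OF finite_nbhd_H u(1), of j] Suc.IH[OF u(2,3)] u(4) by simp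
  moreover have "0 \<le> feat ((Gamma^^Suc j) (H_graph K \<beta>)) a"
    using Gamma_H_lower[OF assms(1), of a K "Suc j"] Suc.prems by simp
  ultimately show ?case by simp
qed

lemma Gamma_H_u_side:
  assumes "1 \<le> \<beta>" "K < a" "a \<le> 2*K+1" "1 \<le> H_idx K a" "H_idx K a \<le> j"
  shows "feat ((Gamma^^j) (H_graph K \<beta>)) a = 1"
proof -
  obtain j' where j: "j = Suc j'" using assms(4,5) by (cases j) auto
  define u where "u = H_idx K a - 1"
  have u: "u \<le> K" "u \<le> j'" using assms unfolding u_def j by (auto simp: H_idx_def)
  have "u \<in> nbhd (H_graph K \<beta>) a" "ef (H_graph K \<beta>) u a = 1"
    using assms u unfolding u_def by (auto simp: nbhd_def ef_def H_graph_simps H_idx_def)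
  then have "feat ((Gamma^^j) (H_graph K \<beta>)) a \<le> 1"
    using feat_Gamma_Suc_le[OF finite_nbhd_H, of u K \<beta> a j'] Gamma_H_v_side[OF assms(1) u] j by simp
  moreover have "1 \<le> feat ((Gamma^^j) (H_graph K \<beta>)) a"
    using Gamma_H_lower[OF assms(1) assms(3), of j] assms(2) by simp
  ultimately show ?thesis by simp
qed

lemma Gamma_H_targets:
  assumes "1 \<le> K" "1 \<le> \<beta>"
  shows "feat ((Gamma^^K) (H_graph K \<beta>)) K = 0" "feat ((Gamma^^K) (H_graph K \<beta>)) (2*K+1) = 1"
proof -
  have "H_idx K (2*K+1) = K" by (simp add: H_idx_def)
  then show "feat ((Gamma^^K) (H_graph K \<beta>)) (2*K+1) = 1"
    using Gamma_H_u_side[OF assms(2), of K "2*K+1" K] assms(1) by simp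
qed (rule Gamma_H_v_side[OF assms(2) order_refl order_refl])

section \<open>Twin symmetry of the hidden states on \<open>H\<^sub>K\<close>\<close>

definition depends_at :: "nat \<Rightarrow> ((nat \<Rightarrow> real) \<Rightarrow> (nat \<Rightarrow> real)) \<Rightarrow> nat \<Rightarrow> nat set \<Rightarrow> bool" where
  "depends_at n f c S \<longleftrightarrow>
     (\<exists>x y. nonneg_vec n x \<and> nonneg_vec n y \<and> (\<forall>i<n. i \<notin> S \<longrightarrow> x i = y i) \<and> f x c \<noteq> f y c)"

definition joint_coord :: "nat \<Rightarrow> nat \<Rightarrow> nat \<Rightarrow> gnn_params \<Rightarrow> nat \<Rightarrow> nat \<Rightarrow> bool" where
  "joint_coord L d m \<theta> l c \<longleftrightarrow>
     depends_at (dimh L d (l - 1) + 1) (f_agg L d m \<theta> l) c {..<dimh L d (l - 1)}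
   \<and> depends_at (dimh L d (l - 1) + 1) (f_agg L d m \<theta> l) c {dimh L d (l - 1)}"

text \<open>Only a layer whose update reads a message coordinate depending jointly on node and edge
  features can push the asymmetry of \<open>H\<^sub>K\<close> one step further along the twin pairs.\<close>

definition uses_joint_coord :: "nat \<Rightarrow> nat \<Rightarrow> nat \<Rightarrow> gnn_params \<Rightarrow> nat \<Rightarrow> bool" where
  "uses_joint_coord L d m \<theta> l \<longleftrightarrow>
     depends_on (wup L d m l 0) (f_up L d m \<theta> l) {c. c < d \<and> joint_coord L d m \<theta> l c}"

definition joint_layers :: "nat \<Rightarrow> nat \<Rightarrow> nat \<Rightarrow> gnn_params \<Rightarrow> nat set" where
  "joint_layers L d m \<theta> = {l\<in>{1..L}. uses_joint_coord L d m \<theta> l}"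

definition deficient :: "nat \<Rightarrow> nat \<Rightarrow> nat \<Rightarrow> nat \<Rightarrow> gnn_params \<Rightarrow> bool" where
  "deficient K L d m \<theta> \<longleftrightarrow> (\<exists>l\<in>{1..L}. constant_on_nonneg (wup L d m l 0) (f_up L d m \<theta> l))
     \<or> card (joint_layers L d m \<theta>) < K"

definition agg_msg :: "nat \<Rightarrow> nat \<Rightarrow> nat \<Rightarrow> gnn_params \<Rightarrow> wgraph \<Rightarrow> nat \<Rightarrow> nat \<Rightarrow> nat \<Rightarrow> real" where
  "agg_msg L d m \<theta> G l a i = Min ((\<lambda>u. f_agg L d m \<theta> (Suc l)
       (vconcat (dimh L d l) (gnn_h L d m \<theta> G l u) (\<lambda>k. if k = 0 then ef G u a else 0)) i) ` nbhd G a)"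

lemma gnn_h_Suc_agg_msg:
  "gnn_h L d m \<theta> G (Suc l) a
     = f_up L d m \<theta> (Suc l) (vconcat d (agg_msg L d m \<theta> G l a) (gnn_h L d m \<theta> G l a))"
  by (simp add: agg_msg_def[abs_def])

lemma gnn_h_nonneg:
  assumes "1 \<le> m" "\<forall>u. 0 \<le> feat G u"
  shows "nonneg_vec (dimh L d l) (gnn_h L d m \<theta> G l u)"
proof (cases l)
  case 0 then show ?thesis using assms by (auto simp: nonneg_vec_def dimh_def)
next
  case (Suc l')
  have "wup L d m (Suc l') m = dimh L d (Suc l')" using assms(1) by (simp add: wup_def)
  then show ?thesis unfolding Suc gnn_h.simps f_up_def nonneg_vec_def
    using mlp_nonneg[of m] mlp_beyond_width[of m] assms(1) by auto
qed

lemma nonneg_vec_edge_input: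
  "nonneg_vec p z \<Longrightarrow> 0 \<le> e \<Longrightarrow> nonneg_vec (p + 1) (vconcat p z (\<lambda>k. if k = 0 then e else 0))"
  by (auto simp: nonneg_vec_def vconcat_def)

lemma f_agg_nonneg: "1 \<le> m \<Longrightarrow> 0 \<le> f_agg L d m \<theta> l x i"
  unfolding f_agg_def by (rule mlp_nonneg) simp

definition twin_sym :: "nat \<Rightarrow> nat \<Rightarrow> (nat \<Rightarrow> 'a) \<Rightarrow> bool" where
  "twin_sym K t g \<longleftrightarrow> (\<forall>a \<le> 2*K+1. t \<le> H_idx K a \<longrightarrow> g (twin K a) = g a)"

text \<open>After layer \<open>l\<close> the twins of index at least \<open>sym_level C E l\<close> agree, where \<open>C\<close> marks the
  layers with constant update and \<open>E\<close> those using a joint coordinate. Level \<open>0\<close> means that all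
  twins agree, which no later layer can undo.\<close>

fun sym_level :: "(nat \<Rightarrow> bool) \<Rightarrow> (nat \<Rightarrow> bool) \<Rightarrow> nat \<Rightarrow> nat" where
  "sym_level C E 0 = 1"
| "sym_level C E (Suc l) =
     (if C (Suc l) then 0 else if E (Suc l) \<and> sym_level C E l \<noteq> 0 then Suc (sym_level C E l)
      else sym_level C E l)"

lemma sym_level_le: "sym_level C E l \<le> 1 + card {l'\<in>{1..l}. E l'}"
proof (induction l)
  case (Suc l)
  have "{l'\<in>{1..Suc l}. E l'} = (if E (Suc l) then insert (Suc l) else id) {l'\<in>{1..l}. E l'}"
    by (auto simp: le_Suc_eq)
  then show ?case using Suc.IH by auto
qed simp

lemma sym_level_eq_0: "l' \<in> {1..l} \<Longrightarrow> C l' \<Longrightarrow> sym_level C E l = 0"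
  by (induction l) (auto simp: le_Suc_eq)

context
  fixes L d m :: nat and \<theta> :: gnn_params and K :: nat and \<beta> :: real
  assumes m1: "1 \<le> m" and bpos: "0 < \<beta>"
begin

abbreviation msg_coord :: "nat \<Rightarrow> nat \<Rightarrow> (nat \<Rightarrow> real) \<Rightarrow> real \<Rightarrow> real" where
  "msg_coord l c z e \<equiv> f_agg L d m \<theta> (Suc l) (vconcat (dimh L d l) z (\<lambda>k. if k = 0 then e else 0)) c"

lemma gnn_h_H_nonneg: "nonneg_vec (dimh L d l) (gnn_h L d m \<theta> (H_graph K \<beta>) l u)"
  using bpos by (intro gnn_h_nonneg[OF m1]) (simp add: H_graph_simps)

lemma update_input_H_nonneg:
  "nonneg_vec (wup L d m (Suc l) 0)
     (vconcat d (agg_msg L d m \<theta> (H_graph K \<beta>) l a) (gnn_h L d m \<theta> (H_graph K \<beta>) l a))"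
proof -
  have "0 \<le> agg_msg L d m \<theta> (H_graph K \<beta>) l a i" for i
    unfolding agg_msg_def using finite_nbhd_H[of K \<beta> a] f_agg_nonneg[OF m1]
    by (subst Min_ge_iff) (auto simp: nbhd_def)
  then show ?thesis
    using gnn_h_H_nonneg[of l a] by (auto simp: wup_def nonneg_vec_def vconcat_def)
qed

lemma agg_msg_H_eq:
  "agg_msg L d m \<theta> (H_graph K \<beta>) l a c = Min ((\<lambda>u. msg_coord l c (gnn_h L d m \<theta> (H_graph K \<beta>) l u)
      (ef (H_graph K \<beta>) u a)) ` nbhd (H_graph K \<beta>) a)"
  by (simp add: agg_msg_def)

lemma agg_msg_twin_if_nbhd_sym:
  assumes a: "a \<le> 2*K+1"
    and sym: "\<forall>u\<in>nbhd (H_graph K \<beta>) a.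
      gnn_h L d m \<theta> (H_graph K \<beta>) l (twin K u) = gnn_h L d m \<theta> (H_graph K \<beta>) l u"
  shows "agg_msg L d m \<theta> (H_graph K \<beta>) l (twin K a) c = agg_msg L d m \<theta> (H_graph K \<beta>) l a c"
  unfolding agg_msg_H_eq nbhd_H_twin[OF a] image_image
proof (rule arg_cong[where f=Min], rule image_cong[OF refl])
  fix u assume u: "u \<in> nbhd (H_graph K \<beta>) a"
  have "u \<le> 2*K+1" using nbhd_H_bounds[OF u a] by simp
  then show "msg_coord l c (gnn_h L d m \<theta> (H_graph K \<beta>) l (twin K u)) (ef (H_graph K \<beta>) (twin K u) (twin K a))
      = msg_coord l c (gnn_h L d m \<theta> (H_graph K \<beta>) l u) (ef (H_graph K \<beta>) u a)"
    using sym u by (simp only: ef_H_twin[OF _ a])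
qed

lemma agg_msg_twin_if_node_blind:
  assumes a: "a \<le> 2*K+1"
    and blind: "\<not> depends_at (dimh L d l + 1) (f_agg L d m \<theta> (Suc l)) c {..<dimh L d l}"
  shows "agg_msg L d m \<theta> (H_graph K \<beta>) l (twin K a) c = agg_msg L d m \<theta> (H_graph K \<beta>) l a c"
proof -
  have blind_coord: "msg_coord l c z e = msg_coord l c (\<lambda>_. 0) e"
    if z: "nonneg_vec (dimh L d l) z" and e: "0 \<le> e" for z e
  proof -
    have "nonneg_vec (dimh L d l) (\<lambda>_. 0)" by (simp add: nonneg_vec_def)
    moreover have "\<forall>i<dimh L d l + 1. i \<notin> {..<dimh L d l} \<longrightarrow>
        vconcat (dimh L d l) z (\<lambda>k. if k = 0 then e else 0) i
      = vconcat (dimh L d l) (\<lambda>_. 0) (\<lambda>k. if k = 0 then e else 0) i"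
      by (simp add: vconcat_def)
    ultimately show ?thesis
      using blind nonneg_vec_edge_input[OF z e] nonneg_vec_edge_input[OF _ e]
      unfolding depends_at_def by blast
  qed
  have "agg_msg L d m \<theta> (H_graph K \<beta>) l v c =
      Min ((\<lambda>u. msg_coord l c (\<lambda>_. 0) (ef (H_graph K \<beta>) u v)) ` nbhd (H_graph K \<beta>) v)" for v
    unfolding agg_msg_H_eq using blind_coord[OF gnn_h_H_nonneg ef_H_nonneg] by simp
  moreover have "(\<lambda>u. msg_coord l c (\<lambda>_. 0) (ef (H_graph K \<beta>) u (twin K a))) ` nbhd (H_graph K \<beta>) (twin K a)
      = (\<lambda>u. msg_coord l c (\<lambda>_. 0) (ef (H_graph K \<beta>) u a)) ` nbhd (H_graph K \<beta>) a"
    unfolding nbhd_H_twin[OF a] image_image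
    by (rule image_cong[OF refl]) (use nbhd_H_bounds[OF _ a] ef_H_twin[OF _ a] in metis)
  ultimately show ?thesis by simp
qed

text \<open>Twins have the same open neighbourhood, so a message blind to edge weights only sees their
  own states.\<close>

lemma agg_msg_twin_if_edge_blind:
  assumes a: "a \<le> 2*K+1"
    and blind: "\<not> depends_at (dimh L d l + 1) (f_agg L d m \<theta> (Suc l)) c {dimh L d l}"
    and same: "gnn_h L d m \<theta> (H_graph K \<beta>) l (twin K a) = gnn_h L d m \<theta> (H_graph K \<beta>) l a"
  shows "agg_msg L d m \<theta> (H_graph K \<beta>) l (twin K a) c = agg_msg L d m \<theta> (H_graph K \<beta>) l a c"
proof -
  have blind_coord: "msg_coord l c z e = msg_coord l c z 0"
    if z: "nonneg_vec (dimh L d l) z" and e: "0 \<le> e" for z e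
  proof -
    have "\<forall>i<dimh L d l + 1. i \<notin> {dimh L d l} \<longrightarrow>
        vconcat (dimh L d l) z (\<lambda>k. if k = 0 then e else 0) i
      = vconcat (dimh L d l) z (\<lambda>k. if k = 0 then 0 else 0) i"
      by (simp add: vconcat_def)
    then show ?thesis
      using blind nonneg_vec_edge_input[OF z e] nonneg_vec_edge_input[OF z order_refl]
      unfolding depends_at_def by auto
  qed
  have "agg_msg L d m \<theta> (H_graph K \<beta>) l v c =
      Min ((\<lambda>u. msg_coord l c (gnn_h L d m \<theta> (H_graph K \<beta>) l u) 0) ` nbhd (H_graph K \<beta>) v)" for v
    unfolding agg_msg_H_eq using blind_coord[OF gnn_h_H_nonneg ef_H_nonneg] by simp
  then show ?thesis using same adj_H_twin(2)[OF a] by (simp add: nbhd_def)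
qed

lemma agg_msg_twin_if_not_joint:
  assumes a: "a \<le> 2*K+1"
    and same: "gnn_h L d m \<theta> (H_graph K \<beta>) l (twin K a) = gnn_h L d m \<theta> (H_graph K \<beta>) l a"
    and "\<not> joint_coord L d m \<theta> (Suc l) c"
  shows "agg_msg L d m \<theta> (H_graph K \<beta>) l (twin K a) c = agg_msg L d m \<theta> (H_graph K \<beta>) l a c"
proof (cases "depends_at (dimh L d l + 1) (f_agg L d m \<theta> (Suc l)) c {..<dimh L d l}")
  case True
  then have "\<not> depends_at (dimh L d l + 1) (f_agg L d m \<theta> (Suc l)) c {dimh L d l}"
    using assms(3) by (simp add: joint_coord_def)
  then show ?thesis by (rule agg_msg_twin_if_edge_blind[OF a _ same])
next
  case False
  then show ?thesis by (rule agg_msg_twin_if_node_blind[OF a])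
qed

lemma twin_sym_Suc_if_const_update:
  assumes "constant_on_nonneg (wup L d m (Suc l) 0) (f_up L d m \<theta> (Suc l))"
  shows "twin_sym K 0 (gnn_h L d m \<theta> (H_graph K \<beta>) (Suc l))"
  using assms update_input_H_nonneg
  unfolding twin_sym_def gnn_h_Suc_agg_msg constant_on_nonneg_def by blast

lemma twin_sym_Suc:
  assumes sym: "twin_sym K t (gnn_h L d m \<theta> (H_graph K \<beta>) l)"
  shows "twin_sym K (if t = 0 then 0 else Suc t) (gnn_h L d m \<theta> (H_graph K \<beta>) (Suc l))"
  unfolding twin_sym_def
proof (intro allI impI)
  fix a assume a: "a \<le> 2*K+1" and ta: "(if t = 0 then 0 else Suc t) \<le> H_idx K a"
  have nbhd_sym: "\<forall>u\<in>nbhd (H_graph K \<beta>) a.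
      gnn_h L d m \<theta> (H_graph K \<beta>) l (twin K u) = gnn_h L d m \<theta> (H_graph K \<beta>) l u"
  proof
    fix u assume u: "u \<in> nbhd (H_graph K \<beta>) a"
    have "u \<le> 2*K+1" "t \<le> H_idx K u" using nbhd_H_bounds[OF u a] ta by (auto split: if_splits)
    then show "gnn_h L d m \<theta> (H_graph K \<beta>) l (twin K u) = gnn_h L d m \<theta> (H_graph K \<beta>) l u"
      using sym unfolding twin_sym_def by blast
  qed
  then have "gnn_h L d m \<theta> (H_graph K \<beta>) l (twin K a) = gnn_h L d m \<theta> (H_graph K \<beta>) l a"
    by (simp add: nbhd_def)
  then show "gnn_h L d m \<theta> (H_graph K \<beta>) (Suc l) (twin K a) = gnn_h L d m \<theta> (H_graph K \<beta>) (Suc l) a"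
    using agg_msg_twin_if_nbhd_sym[OF a nbhd_sym] unfolding gnn_h_Suc_agg_msg by presburger
qed

lemma twin_sym_Suc_if_no_joint:
  assumes sym: "twin_sym K t (gnn_h L d m \<theta> (H_graph K \<beta>) l)"
    and no_joint: "\<not> uses_joint_coord L d m \<theta> (Suc l)"
  shows "twin_sym K t (gnn_h L d m \<theta> (H_graph K \<beta>) (Suc l))"
  unfolding twin_sym_def
proof (intro allI impI)
  fix a assume a: "a \<le> 2*K+1" and "t \<le> H_idx K a"
  then have same: "gnn_h L d m \<theta> (H_graph K \<beta>) l (twin K a) = gnn_h L d m \<theta> (H_graph K \<beta>) l a"
    using sym unfolding twin_sym_def by blast
  let ?x = "vconcat d (agg_msg L d m \<theta> (H_graph K \<beta>) l (twin K a)) (gnn_h L d m \<theta> (H_graph K \<beta>) l (twin K a))"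
  let ?y = "vconcat d (agg_msg L d m \<theta> (H_graph K \<beta>) l a) (gnn_h L d m \<theta> (H_graph K \<beta>) l a)"
  have agree: "\<forall>i<wup L d m (Suc l) 0. i \<notin> {c. c < d \<and> joint_coord L d m \<theta> (Suc l) c} \<longrightarrow> ?x i = ?y i"
  proof (intro allI impI)
    fix i assume "i \<notin> {c. c < d \<and> joint_coord L d m \<theta> (Suc l) c}"
    show "?x i = ?y i"
    proof (cases "i < d")
      case True
      with \<open>i \<notin> _\<close> have "agg_msg L d m \<theta> (H_graph K \<beta>) l (twin K a) i = agg_msg L d m \<theta> (H_graph K \<beta>) l a i"
        using agg_msg_twin_if_not_joint[OF a same] by simp
      then show ?thesis using True by (simp add: vconcat_def)
    qed (simp add: vconcat_def same)
  qed
  have "f_up L d m \<theta> (Suc l) ?x = f_up L d m \<theta> (Suc l) ?y"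
  proof (cases "?x = ?y")
    case False
    then show ?thesis
      using no_joint agree update_input_H_nonneg unfolding uses_joint_coord_def depends_on_def by blast
  qed simp
  then show "gnn_h L d m \<theta> (H_graph K \<beta>) (Suc l) (twin K a) = gnn_h L d m \<theta> (H_graph K \<beta>) (Suc l) a"
    unfolding gnn_h_Suc_agg_msg .
qed

lemma twin_sym_gnn_h:
  "twin_sym K (sym_level (\<lambda>l. constant_on_nonneg (wup L d m l 0) (f_up L d m \<theta> l)) (uses_joint_coord L d m \<theta>) l)
      (gnn_h L d m \<theta> (H_graph K \<beta>) l)"
proof (induction l)
  case 0
  have "gnn_h L d m \<theta> (H_graph K \<beta>) 0 (twin K a) = gnn_h L d m \<theta> (H_graph K \<beta>) 0 a"
    if "1 \<le> H_idx K a" for a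
  proof -
    have "a \<noteq> 0" "twin K a \<noteq> 0" using that by (auto simp: twin_def H_idx_def split: if_splits)
    then show ?thesis by (simp add: H_graph_def fun_eq_iff)
  qed
  then show ?case by (simp add: twin_sym_def)
next
  case (Suc l)
  let ?C = "\<lambda>l. constant_on_nonneg (wup L d m l 0) (f_up L d m \<theta> l)"
  consider "?C (Suc l)" | "\<not> ?C (Suc l)" "uses_joint_coord L d m \<theta> (Suc l)"
    | "\<not> ?C (Suc l)" "\<not> uses_joint_coord L d m \<theta> (Suc l)"
    by blast
  then show ?case
  proof cases
    case 1
    then show ?thesis using twin_sym_Suc_if_const_update by (simp del: gnn_h.simps)
  next
    case 2
    then show ?thesis using twin_sym_Suc[OF Suc.IH] by (simp del: gnn_h.simps split: if_splits)
  next
    case 3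
    then show ?thesis using twin_sym_Suc_if_no_joint[OF Suc.IH] by (simp del: gnn_h.simps)
  qed
qed

lemma gnn_out_H_twins_collide:
  assumes "deficient K L d m \<theta>"
  shows "gnn_out L d m \<theta> (H_graph K \<beta>) (2*K+1) = gnn_out L d m \<theta> (H_graph K \<beta>) K"
proof -
  let ?t = "sym_level (\<lambda>l. constant_on_nonneg (wup L d m l 0) (f_up L d m \<theta> l)) (uses_joint_coord L d m \<theta>) L"
  have "?t \<le> K"
  proof (cases "\<exists>l\<in>{1..L}. constant_on_nonneg (wup L d m l 0) (f_up L d m \<theta> l)")
    case True
    then show ?thesis using sym_level_eq_0 by (metis zero_le)
  next
    case False
    then have "card (joint_layers L d m \<theta>) < K" using assms by (simp add: deficient_def)
    then show ?thesis
      using sym_level_le[of "\<lambda>l. constant_on_nonneg (wup L d m l 0) (f_up L d m \<theta> l)"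
          "uses_joint_coord L d m \<theta>" L]
      unfolding joint_layers_def by linarith
  qed
  then have "gnn_h L d m \<theta> (H_graph K \<beta>) L (twin K K) = gnn_h L d m \<theta> (H_graph K \<beta>) L K"
    using twin_sym_gnn_h[of L] unfolding twin_sym_def by (simp add: H_idx_def)
  then show ?thesis by (simp add: gnn_out_def twin_def mult_2)
qed

end

section \<open>Counting nonzero parameters\<close>

lemma depends_at_imp_depends_on: "depends_at n f c S \<Longrightarrow> depends_on n f S"
  unfolding depends_at_def depends_on_def by metis

lemma joint_coord_imp_edge_dep_msg_passing:
  "joint_coord L d m \<theta> l c \<Longrightarrow> edge_dep_msg_passing L d m \<theta> l"
  using depends_at_imp_depends_on
  unfolding joint_coord_def edge_dep_msg_passing_def msg_passing_def by blast

lemma uses_joint_coordE: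
  assumes "uses_joint_coord L d m \<theta> l"
  obtains c where "c < d" "joint_coord L d m \<theta> l c"
proof -
  obtain x y where xy: "nonneg_vec (wup L d m l 0) x" "nonneg_vec (wup L d m l 0) y" "x \<noteq> y"
      "\<forall>i<wup L d m l 0. i \<notin> {c. c < d \<and> joint_coord L d m \<theta> l c} \<longrightarrow> x i = y i"
    using assms unfolding uses_joint_coord_def depends_on_def by blast
  show ?thesis
  proof (rule ccontr)
    assume "\<not> thesis"
    then have "x i = y i" for i
      using that xy unfolding nonneg_vec_def by (cases "i < wup L d m l 0") auto
    then show False using xy(3) by blast
  qed
qed

lemma nnz_up_pos_if_nonconst:
  assumes "\<not> constant_on_nonneg (wup L d m l 0) (f_up L d m \<theta> l)" "j \<in> {1..m}"
  shows "1 \<le> nnz_mat (wup L d m l j) (wup L d m l (j - 1)) (Wup \<theta> l j)"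
  using assms nnz_mat_pos_if_mlp_nonconst unfolding constant_on_nonneg_def f_up_def by blast

lemma nnz_agg_pos_if_joint:
  assumes "joint_coord L d m \<theta> l c" "j \<in> {1..m}"
  shows "1 \<le> nnz_mat (wagg L d l j) (wagg L d l (j - 1)) (Wagg \<theta> l j)"
proof -
  obtain x y where "f_agg L d m \<theta> l x \<noteq> f_agg L d m \<theta> l y"
    using assms(1) unfolding joint_coord_def depends_at_def by metis
  then show ?thesis using assms(2) nnz_mat_pos_if_mlp_nonconst unfolding f_agg_def by blast
qed

text \<open>With one nonzero weight in its first layer, \<open>f_agg\<close> would be a function of a single input
  coordinate, which cannot lie both in the node and in the edge component.\<close>

lemma nnz_agg_first_ge_2_if_joint:
  assumes m1: "1 \<le> m" and joint: "joint_coord L d m \<theta> l c"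
  shows "2 \<le> nnz_mat (wagg L d l 1) (wagg L d l 0) (Wagg \<theta> l 1)"
proof (rule ccontr)
  define p where "p = dimh L d (l - 1)"
  define M where "M = mlp (wagg L d l) (Wagg \<theta> l) (bagg \<theta> l)"
  assume "\<not> ?thesis"
  then have "nnz_mat (wagg L d l (Suc 0)) (wagg L d l 0) (Wagg \<theta> l (Suc 0)) \<le> 1" by simp
  then obtain k0 where k0: "\<forall>x y. M 0 x k0 = M 0 y k0 \<longrightarrow> M (Suc 0) x = M (Suc 0) y"
    unfolding M_def by (rule mlp_Suc_factors_through_column[THEN exE])
  have agree: "f_agg L d m \<theta> l x = f_agg L d m \<theta> l y" if "x k0 = y k0" for x y
  proof -
    have "M 0 x k0 = M 0 y k0" using that by (simp add: M_def)
    then have "M (Suc 0) x = M (Suc 0) y" using k0 by blast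
    then show ?thesis unfolding f_agg_def M_def by (rule mlp_eq_if_eq_below) (use m1 in simp)
  qed
  show False
  proof (cases "k0 < p")
    case True
    obtain x y where xy: "\<forall>i<p+1. i \<notin> {p} \<longrightarrow> x i = y i" "f_agg L d m \<theta> l x c \<noteq> f_agg L d m \<theta> l y c"
      using joint unfolding joint_coord_def depends_at_def p_def by blast
    have "x k0 = y k0" using xy(1) True by simp
    then have "f_agg L d m \<theta> l x = f_agg L d m \<theta> l y" by (rule agree)
    then show False using xy(2) by simp
  next
    case False
    obtain x y where xy: "nonneg_vec (p+1) x" "nonneg_vec (p+1) y"
        "\<forall>i<p+1. i \<notin> {..<p} \<longrightarrow> x i = y i" "f_agg L d m \<theta> l x c \<noteq> f_agg L d m \<theta> l y c"
      using joint unfolding joint_coord_def depends_at_def p_def by blast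
    have "x k0 = y k0"
    proof (cases "k0 = p")
      case False
      then have "p + 1 \<le> k0" using \<open>\<not> k0 < p\<close> by simp
      then show ?thesis using xy(1,2) unfolding nonneg_vec_def by simp
    qed (use xy(3) in simp)
    then have "f_agg L d m \<theta> l x = f_agg L d m \<theta> l y" by (rule agree)
    then show False using xy(4) by simp
  qed
qed

lemma not_msg_passing_if_zero_first_layer:
  assumes "1 \<le> m" "nnz_mat (wagg L d l 1) (wagg L d l 0) (Wagg \<theta> l 1) = 0"
  shows "\<not> msg_passing L d m \<theta> l"
proof -
  have "f_agg L d m \<theta> l x = f_agg L d m \<theta> l y" for x y
    unfolding f_agg_def by (rule mlp_const_if_zero_layer[where j=1]) (use assms in auto)
  then show ?thesis unfolding msg_passing_def depends_on_def by blast
qed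

lemma mlp_factors_through_first_layer:
  assumes "1 \<le> m" and later: "\<forall>j\<in>{2..m}. nnz_mat (w j) (w (j - 1)) (W j) = 1"
  obtains r where "\<And>x y. mlp w W b 1 x r = mlp w W b 1 y r \<Longrightarrow> mlp w W b m x c = mlp w W b m y c"
proof (cases "m = 1")
  case True
  then show ?thesis using that[of c] by simp
next
  case False
  then have "nnz_mat (w (Suc 1)) (w 1) (W (Suc 1)) \<le> 1"
    using bspec[OF later, of 2] \<open>1 \<le> m\<close> by (simp add: numeral_2_eq_2)
  then obtain k0 where k0: "\<forall>x y. mlp w W b 1 x k0 = mlp w W b 1 y k0 \<longrightarrow> mlp w W b (Suc 1) x = mlp w W b (Suc 1) y"
    by (rule mlp_Suc_factors_through_column[THEN exE])
  show ?thesis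
  proof (rule that)
    fix x y assume "mlp w W b 1 x k0 = mlp w W b 1 y k0"
    then have "mlp w W b (Suc 1) x = mlp w W b (Suc 1) y" using k0 by blast
    then have "mlp w W b m x = mlp w W b m y" by (rule mlp_eq_if_eq_below) (use False \<open>1 \<le> m\<close> in simp)
    then show "mlp w W b m x c = mlp w W b m y c" by simp
  qed
qed

text \<open>The output coordinate \<open>c\<close> factors through a single neuron \<open>r\<close> of the first layer. That neuron
  must see a node coordinate and the edge coordinate, which uses up both nonzero weights of the
  first layer.\<close>

lemma joint_coord_first_layer_one_row:
  assumes m1: "1 \<le> m" and joint: "joint_coord L d m \<theta> l c"
    and first: "nnz_mat (wagg L d l 1) (wagg L d l 0) (Wagg \<theta> l 1) = 2"
    and later: "\<forall>j\<in>{2..m}. nnz_mat (wagg L d l j) (wagg L d l (j - 1)) (Wagg \<theta> l j) = 1"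
  shows "\<exists>r. \<forall>i k. i < wagg L d l 1 \<and> k < wagg L d l 0 \<and> Wagg \<theta> l 1 i k \<noteq> 0 \<longrightarrow> i = r"
proof -
  define p where "p = dimh L d (l - 1)"
  define M where "M = mlp (wagg L d l) (Wagg \<theta> l) (bagg \<theta> l)"
  have fa: "f_agg L d m \<theta> l = M m" unfolding f_agg_def M_def by simp
  obtain r where r: "\<And>x y. M 1 x r = M 1 y r \<Longrightarrow> M m x c = M m y c"
    unfolding M_def using mlp_factors_through_first_layer[OF m1 later] by blast
  obtain xn yn where xyn: "nonneg_vec (p+1) xn" "nonneg_vec (p+1) yn"
      "\<forall>i<p+1. i \<notin> {..<p} \<longrightarrow> xn i = yn i" "M m xn c \<noteq> M m yn c"
    using joint unfolding joint_coord_def depends_at_def p_def fa by blast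
  obtain xe ye where xye: "\<forall>i<p+1. i \<notin> {p} \<longrightarrow> xe i = ye i" "M m xe c \<noteq> M m ye c"
    using joint unfolding joint_coord_def depends_at_def p_def fa by blast
  have rl: "r < wagg L d l 1"
  proof (rule ccontr)
    assume "\<not> ?thesis"
    then have "M 1 xn r = M 1 yn r" unfolding M_def by (simp add: relu_layer_def)
    then show False using r xyn(4) by blast
  qed
  have M1: "M 1 x r = max 0 ((\<Sum>k<p+1. Wagg \<theta> l 1 r k * x k) + bagg \<theta> l 1 r)" for x
    using rl unfolding M_def by (simp add: relu_layer_def wagg_def p_def)
  have "\<exists>k1<p. Wagg \<theta> l 1 r k1 \<noteq> 0"
  proof (rule ccontr)
    assume "\<not> ?thesis"
    then have "(\<Sum>k<p+1. Wagg \<theta> l 1 r k * x k) = Wagg \<theta> l 1 r p * x p" for x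
      by simp
    then have "M 1 xn r = M 1 yn r" using xyn(3) unfolding M1 by simp
    then show False using r xyn(4) by blast
  qed
  then obtain k1 where k1: "k1 < p" "Wagg \<theta> l 1 r k1 \<noteq> 0" by blast
  have "Wagg \<theta> l 1 r p \<noteq> 0"
  proof
    assume "Wagg \<theta> l 1 r p = 0"
    moreover have "(\<Sum>k<p. Wagg \<theta> l 1 r k * xe k) = (\<Sum>k<p. Wagg \<theta> l 1 r k * ye k)"
      using xye(1) by (intro sum.cong) auto
    ultimately have "M 1 xe r = M 1 ye r" unfolding M1 by simp
    then show False using r xye(2) by blast
  qed
  define S where "S = {(i, k). i < wagg L d l 1 \<and> k < wagg L d l 0 \<and> Wagg \<theta> l 1 i k \<noteq> 0}"
  have "wagg L d l 0 = p + 1" by (simp add: wagg_def p_def)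
  then have in_S: "(r, k1) \<in> S" "(r, p) \<in> S"
    using rl k1 \<open>Wagg \<theta> l 1 r p \<noteq> 0\<close> by (simp_all add: S_def)
  have "card S = 2" using first unfolding S_def nnz_mat_def .
  have "finite S" unfolding S_def by (rule finite_index_pairs)
  show ?thesis
  proof (intro exI allI impI)
    fix i k assume "i < wagg L d l 1 \<and> k < wagg L d l 0 \<and> Wagg \<theta> l 1 i k \<noteq> 0"
    then have "{(r, k1), (r, p), (i, k)} \<subseteq> S" using in_S by (simp add: S_def)
    then have "card {(r, k1), (r, p), (i, k)} \<le> 2"
      using card_mono[OF \<open>finite S\<close>] \<open>card S = 2\<close> by simp
    then show "i = r" using k1(1) by (cases "i = r") auto
  qed
qed

definition agg_cost :: "nat \<Rightarrow> nat \<Rightarrow> nat \<Rightarrow> gnn_params \<Rightarrow> nat \<Rightarrow> nat" where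
  "agg_cost L d m \<theta> l = (\<Sum>j\<in>{1..m}. nnz_mat (wagg L d l j) (wagg L d l (j - 1)) (Wagg \<theta> l j)
                                   + nnz_vec (wagg L d l j) (bagg \<theta> l j))"

definition up_cost :: "nat \<Rightarrow> nat \<Rightarrow> nat \<Rightarrow> gnn_params \<Rightarrow> nat \<Rightarrow> nat" where
  "up_cost L d m \<theta> l = (\<Sum>j\<in>{1..m}. nnz_mat (wup L d m l j) (wup L d m l (j - 1)) (Wup \<theta> l j)
                                  + nnz_vec (wup L d m l j) (bup \<theta> l j))"

lemma norm0_eq_sum_costs:
  "norm0 L d m \<theta> = (\<Sum>l\<in>{1..L}. up_cost L d m \<theta> l) + (\<Sum>l\<in>{1..L}. agg_cost L d m \<theta> l)"
  unfolding norm0_def agg_cost_def up_cost_def by (simp add: sum.distrib ac_simps)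

lemma sum_two_then_ones: "1 \<le> m \<Longrightarrow> (\<Sum>j\<in>{1..m}. if j = 1 then 2 else 1::nat) = m + 1"
proof -
  assume "1 \<le> m"
  then have "{1..m} = insert 1 {2..m}" by auto
  then show ?thesis using \<open>1 \<le> m\<close> by simp
qed

lemma up_layer_cost_ge:
  assumes "\<not> constant_on_nonneg (wup L d m l 0) (f_up L d m \<theta> l)" "j \<in> {1..m}"
  shows "1 \<le> nnz_mat (wup L d m l j) (wup L d m l (j - 1)) (Wup \<theta> l j) + nnz_vec (wup L d m l j) (bup \<theta> l j)"
  using nnz_up_pos_if_nonconst[OF assms] by simp

lemma agg_layer_cost_ge:
  assumes "1 \<le> m" "uses_joint_coord L d m \<theta> l" "j \<in> {1..m}"
  shows "(if j = 1 then 2 else 1) \<le>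
     nnz_mat (wagg L d l j) (wagg L d l (j - 1)) (Wagg \<theta> l j) + nnz_vec (wagg L d l j) (bagg \<theta> l j)"
proof -
  obtain c where c: "joint_coord L d m \<theta> l c" using assms(2) by (rule uses_joint_coordE)
  show ?thesis
  proof (cases "j = 1")
    case True
    then show ?thesis using nnz_agg_first_ge_2_if_joint[OF assms(1) c] by simp
  next
    case False
    then show ?thesis using nnz_agg_pos_if_joint[OF c assms(3)] by simp
  qed
qed

lemma up_cost_ge:
  assumes "\<not> constant_on_nonneg (wup L d m l 0) (f_up L d m \<theta> l)"
  shows "m \<le> up_cost L d m \<theta> l"
proof -
  have "(\<Sum>j\<in>{1..m}. 1) \<le> up_cost L d m \<theta> l"
    unfolding up_cost_def by (rule sum_mono) (rule up_layer_cost_ge[OF assms])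
  then show ?thesis by simp
qed

lemma agg_cost_ge:
  assumes "1 \<le> m" "uses_joint_coord L d m \<theta> l"
  shows "m + 1 \<le> agg_cost L d m \<theta> l"
proof -
  have "(\<Sum>j\<in>{1..m}. if j = 1 then 2 else 1) \<le> agg_cost L d m \<theta> l"
    unfolding agg_cost_def by (rule sum_mono) (rule agg_layer_cost_ge[OF assms])
  then show ?thesis using sum_two_then_ones[OF assms(1)] by simp
qed

lemma up_layer_shape:
  assumes nc: "\<not> constant_on_nonneg (wup L d m l 0) (f_up L d m \<theta> l)"
    and "up_cost L d m \<theta> l = m" and j: "j \<in> {1..m}"
  shows "nnz_mat (wup L d m l j) (wup L d m l (j - 1)) (Wup \<theta> l j) = 1 \<and> nnz_vec (wup L d m l j) (bup \<theta> l j) = 0"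
proof -
  have "(\<Sum>j\<in>{1..m}. 1) = up_cost L d m \<theta> l" using assms(2) by simp
  then have "1 = nnz_mat (wup L d m l j) (wup L d m l (j - 1)) (Wup \<theta> l j) + nnz_vec (wup L d m l j) (bup \<theta> l j)"
    unfolding up_cost_def by (rule sum_mono_inv) (use up_layer_cost_ge[OF nc] j in auto)
  then show ?thesis using nnz_up_pos_if_nonconst[OF nc j] by simp
qed

lemma agg_layer_shape:
  assumes m1: "1 \<le> m" and joint: "uses_joint_coord L d m \<theta> l" and "agg_cost L d m \<theta> l = m + 1"
    and j: "j \<in> {1..m}"
  shows "nnz_mat (wagg L d l j) (wagg L d l (j - 1)) (Wagg \<theta> l j) = (if j = 1 then 2 else 1)
      \<and> nnz_vec (wagg L d l j) (bagg \<theta> l j) = 0"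
proof -
  have "(\<Sum>j\<in>{1..m}. if j = 1 then 2 else 1) = agg_cost L d m \<theta> l"
    using assms(3) sum_two_then_ones[OF m1] by simp
  then have "(if j = 1 then 2 else 1) =
      nnz_mat (wagg L d l j) (wagg L d l (j - 1)) (Wagg \<theta> l j) + nnz_vec (wagg L d l j) (bagg \<theta> l j)"
    unfolding agg_cost_def by (rule sum_mono_inv) (use agg_layer_cost_ge[OF m1 joint] j in auto)
  moreover obtain c where c: "joint_coord L d m \<theta> l c" using joint by (rule uses_joint_coordE)
  ultimately show ?thesis
    using nnz_agg_first_ge_2_if_joint[OF m1 c] nnz_agg_pos_if_joint[OF c j] by (cases "j = 1") simp_all
qed

lemma norm0_split_joint_layers:
  "norm0 L d m \<theta> = (\<Sum>l\<in>{1..L}. up_cost L d m \<theta> l) + (\<Sum>l\<in>joint_layers L d m \<theta>. agg_cost L d m \<theta> l)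
     + (\<Sum>l\<in>{1..L} - joint_layers L d m \<theta>. agg_cost L d m \<theta> l)"
proof -
  have "joint_layers L d m \<theta> \<subseteq> {1..L}" by (auto simp: joint_layers_def)
  then show ?thesis
    unfolding norm0_eq_sum_costs using sum.subset_diff[of "joint_layers L d m \<theta>" "{1..L}"] by (simp add: add.commute)
qed

context
  fixes K L d m :: nat and \<theta> :: gnn_params
  assumes m1: "1 \<le> m" and nd: "\<not> deficient K L d m \<theta>"
begin

lemma sum_up_cost_ge: "m * L \<le> (\<Sum>l\<in>{1..L}. up_cost L d m \<theta> l)"
proof -
  have "(\<Sum>l\<in>{1..L}. m) \<le> (\<Sum>l\<in>{1..L}. up_cost L d m \<theta> l)"
    using nd up_cost_ge by (intro sum_mono) (simp add: deficient_def)
  then show ?thesis by (simp add: mult.commute)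
qed

lemma sum_agg_cost_joint_ge:
  "(m + 1) * card (joint_layers L d m \<theta>) \<le> (\<Sum>l\<in>joint_layers L d m \<theta>. agg_cost L d m \<theta> l)"
proof -
  have "(\<Sum>l\<in>joint_layers L d m \<theta>. m + 1) \<le> (\<Sum>l\<in>joint_layers L d m \<theta>. agg_cost L d m \<theta> l)"
    using agg_cost_ge[OF m1] by (intro sum_mono) (simp add: joint_layers_def)
  then show ?thesis by (simp add: mult.commute)
qed

lemma joint_layers_cost_ge: "m*K + K \<le> (m + 1) * card (joint_layers L d m \<theta>)"
proof -
  have "K \<le> card (joint_layers L d m \<theta>)" using nd by (simp add: deficient_def)
  then have "(m + 1) * K \<le> (m + 1) * card (joint_layers L d m \<theta>)" by (rule mult_le_mono2)
  then show ?thesis by simp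
qed

lemma norm0_ge: "m*L + m*K + K \<le> norm0 L d m \<theta>"
  using sum_up_cost_ge sum_agg_cost_joint_ge joint_layers_cost_ge
  unfolding norm0_split_joint_layers by linarith

context
  assumes tight: "norm0 L d m \<theta> = m*L + m*K + K"
begin

lemma tight_costs:
  shows "card (joint_layers L d m \<theta>) = K"
    and "l \<in> {1..L} \<Longrightarrow> up_cost L d m \<theta> l = m"
    and "l \<in> joint_layers L d m \<theta> \<Longrightarrow> agg_cost L d m \<theta> l = m + 1"
    and "l \<in> {1..L} - joint_layers L d m \<theta> \<Longrightarrow> agg_cost L d m \<theta> l = 0"
proof -
  have eqs: "m * L = (\<Sum>l\<in>{1..L}. up_cost L d m \<theta> l)"
      "(m + 1) * card (joint_layers L d m \<theta>) = (\<Sum>l\<in>joint_layers L d m \<theta>. agg_cost L d m \<theta> l)"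
      "(m + 1) * card (joint_layers L d m \<theta>) = (m + 1) * K"
      "(\<Sum>l\<in>{1..L} - joint_layers L d m \<theta>. agg_cost L d m \<theta> l) = 0"
    using tight sum_up_cost_ge sum_agg_cost_joint_ge joint_layers_cost_ge
    unfolding norm0_split_joint_layers by (simp_all only: add_mult_distrib mult_1)
  have up: "(\<Sum>l\<in>{1..L}. m) = (\<Sum>l\<in>{1..L}. up_cost L d m \<theta> l)"
    using eqs(1) by (simp add: mult.commute)
  have agg: "(\<Sum>l\<in>joint_layers L d m \<theta>. m + 1) = (\<Sum>l\<in>joint_layers L d m \<theta>. agg_cost L d m \<theta> l)"
    using eqs(2) by (simp add: mult.commute)
  have card: "(m + 1) * card (joint_layers L d m \<theta>) = (m + 1) * K" and rest: "(\<Sum>l\<in>{1..L} - joint_layers L d m \<theta>. agg_cost L d m \<theta> l) = 0"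
    using eqs(3,4) .
  show "card (joint_layers L d m \<theta>) = K" using card by (simp only: mult_cancel1) simp
  show "l \<in> {1..L} \<Longrightarrow> up_cost L d m \<theta> l = m"
    by (rule sum_mono_inv[OF up, symmetric]) (use nd up_cost_ge in \<open>simp_all add: deficient_def\<close>)
  show "l \<in> joint_layers L d m \<theta> \<Longrightarrow> agg_cost L d m \<theta> l = m + 1"
    by (rule sum_mono_inv[OF agg, symmetric]) (use agg_cost_ge[OF m1] in \<open>simp_all add: joint_layers_def\<close>)
  show "l \<in> {1..L} - joint_layers L d m \<theta> \<Longrightarrow> agg_cost L d m \<theta> l = 0"
    using rest by simp
qed

lemma msg_passing_iff_joint_layer:
  assumes l: "l \<in> {1..L}"
  shows "msg_passing L d m \<theta> l \<longleftrightarrow> l \<in> joint_layers L d m \<theta>"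
proof
  assume mp: "msg_passing L d m \<theta> l"
  show "l \<in> joint_layers L d m \<theta>"
  proof (rule ccontr)
    assume "l \<notin> joint_layers L d m \<theta>"
    then have "agg_cost L d m \<theta> l = 0" using tight_costs(4) l by blast
    then have zero: "\<forall>j\<in>{1..m}. nnz_mat (wagg L d l j) (wagg L d l (j - 1)) (Wagg \<theta> l j) = 0"
      unfolding agg_cost_def by simp
    have "nnz_mat (wagg L d l 1) (wagg L d l 0) (Wagg \<theta> l 1) = 0"
      using bspec[OF zero, of 1] m1 by simp
    then show False using not_msg_passing_if_zero_first_layer[OF m1] mp by blast
  qed
next
  assume "l \<in> joint_layers L d m \<theta>"
  then obtain c where "joint_coord L d m \<theta> l c"
    unfolding joint_layers_def using uses_joint_coordE by blast
  then show "msg_passing L d m \<theta> l"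
    using joint_coord_imp_edge_dep_msg_passing unfolding edge_dep_msg_passing_def by blast
qed

lemma tight_update_layer:
  assumes "l \<in> {1..L}" "j \<in> {1..m}"
  shows "nnz_mat (wup L d m l j) (wup L d m l (j - 1)) (Wup \<theta> l j) = 1
    \<and> nnz_vec (wup L d m l j) (bup \<theta> l j) = 0"
  using up_layer_shape[OF _ tight_costs(2)[OF assms(1)] assms(2)] nd assms(1) by (simp add: deficient_def)

lemma tight_agg_bias: "l \<in> {1..L} \<Longrightarrow> j \<in> {1..m} \<Longrightarrow> nnz_vec (wagg L d l j) (bagg \<theta> l j) = 0"
proof (cases "l \<in> joint_layers L d m \<theta>")
  case True
  moreover assume "j \<in> {1..m}"
  ultimately show ?thesis
    using agg_layer_shape[OF m1 _ tight_costs(3)] by (simp add: joint_layers_def)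
next
  case False
  moreover assume "l \<in> {1..L}" "j \<in> {1..m}"
  ultimately show ?thesis using tight_costs(4)[of l] unfolding agg_cost_def by simp
qed

lemma tight_msg_passing_layer:
  assumes "l \<in> {1..L}" "msg_passing L d m \<theta> l"
  shows "edge_dep_msg_passing L d m \<theta> l
    \<and> nnz_mat (wagg L d l 1) (wagg L d l 0) (Wagg \<theta> l 1) = 2
    \<and> (\<exists>r. \<forall>i k. i < wagg L d l 1 \<and> k < wagg L d l 0 \<and> Wagg \<theta> l 1 i k \<noteq> 0 \<longrightarrow> i = r)
    \<and> (\<forall>j\<in>{2..m}. nnz_mat (wagg L d l j) (wagg L d l (j - 1)) (Wagg \<theta> l j) = 1)"
proof -
  have l: "l \<in> joint_layers L d m \<theta>" using msg_passing_iff_joint_layer assms by blast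
  then have joint: "uses_joint_coord L d m \<theta> l" by (simp add: joint_layers_def)
  obtain c where c: "joint_coord L d m \<theta> l c" using joint by (rule uses_joint_coordE)
  note shape = agg_layer_shape[OF m1 joint tight_costs(3)[OF l]]
  have first: "nnz_mat (wagg L d l 1) (wagg L d l 0) (Wagg \<theta> l 1) = 2" using shape[of 1] m1 by simp
  have later: "\<forall>j\<in>{2..m}. nnz_mat (wagg L d l j) (wagg L d l (j - 1)) (Wagg \<theta> l j) = 1"
    using shape by auto
  show ?thesis
    using joint_coord_imp_edge_dep_msg_passing[OF c] first later
      joint_coord_first_layer_one_row[OF m1 c first later] by blast
qed

lemma tight_structure:
  "card {l\<in>{1..L}. msg_passing L d m \<theta> l} = K
    \<and> (\<forall>l\<in>{1..L}. msg_passing L d m \<theta> l \<longrightarrow> edge_dep_msg_passing L d m \<theta> l)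
    \<and> (\<forall>l\<in>{1..L}. \<not> constant_on_nonneg (wup L d m l 0) (f_up L d m \<theta> l))
    \<and> (\<forall>l\<in>{1..L}. \<forall>j\<in>{1..m}.
          (\<forall>i<wup L d m l j. bup \<theta> l j i = 0) \<and> (\<forall>i<wagg L d l j. bagg \<theta> l j i = 0))
    \<and> (\<forall>l\<in>{1..L}. \<forall>j\<in>{1..m}. nnz_mat (wup L d m l j) (wup L d m l (j - 1)) (Wup \<theta> l j) = 1)
    \<and> (\<forall>l\<in>{1..L}. msg_passing L d m \<theta> l \<longrightarrow>
          nnz_mat (wagg L d l 1) (wagg L d l 0) (Wagg \<theta> l 1) = 2
        \<and> (\<exists>r. \<forall>i k. i < wagg L d l 1 \<and> k < wagg L d l 0 \<and> Wagg \<theta> l 1 i k \<noteq> 0 \<longrightarrow> i = r)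
        \<and> (\<forall>j\<in>{2..m}. nnz_mat (wagg L d l j) (wagg L d l (j - 1)) (Wagg \<theta> l j) = 1))"
proof -
  have "{l\<in>{1..L}. msg_passing L d m \<theta> l} = joint_layers L d m \<theta>"
    using msg_passing_iff_joint_layer joint_layers_def by blast
  moreover have "\<forall>l\<in>{1..L}. \<not> constant_on_nonneg (wup L d m l 0) (f_up L d m \<theta> l)"
    using nd by (simp add: deficient_def)
  moreover have "\<forall>l\<in>{1..L}. \<forall>j\<in>{1..m}.
      (\<forall>i<wup L d m l j. bup \<theta> l j i = 0) \<and> (\<forall>i<wagg L d l j. bagg \<theta> l j i = 0)"
    using tight_update_layer tight_agg_bias nnz_vec_eq_0D by blast
  moreover have "\<forall>l\<in>{1..L}. \<forall>j\<in>{1..m}. nnz_mat (wup L d m l j) (wup L d m l (j - 1)) (Wup \<theta> l j) = 1"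
    using tight_update_layer by blast
  moreover have "\<forall>l\<in>{1..L}. msg_passing L d m \<theta> l \<longrightarrow> edge_dep_msg_passing L d m \<theta> l"
    and "\<forall>l\<in>{1..L}. msg_passing L d m \<theta> l \<longrightarrow>
        nnz_mat (wagg L d l 1) (wagg L d l 0) (Wagg \<theta> l 1) = 2
      \<and> (\<exists>r. \<forall>i k. i < wagg L d l 1 \<and> k < wagg L d l 0 \<and> Wagg \<theta> l 1 i k \<noteq> 0 \<longrightarrow> i = r)
      \<and> (\<forall>j\<in>{2..m}. nnz_mat (wagg L d l j) (wagg L d l (j - 1)) (Wagg \<theta> l j) = 1)"
    using tight_msg_passing_layer by blast+
  ultimately show ?thesis using tight_costs(1) by simp
qed

end

end

section \<open>A Bellman--Ford network attaining the bound\<close>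

text \<open>In layers \<open>l \<le> K\<close> coordinate \<open>0\<close> of the message is \<open>ReLU(x\<^sub>u + x\<^sub>(\<^sub>u\<^sub>,\<^sub>v\<^sub>))\<close>, so the
  coordinatewise minimum performs one Bellman--Ford step, and the update reads that coordinate;
  in later layers the aggregation is zero and the update reads the node state (coordinate \<open>d\<close> of
  its input). All other weight matrices just pass coordinate \<open>0\<close> on.\<close>

definition bf_theta :: "nat \<Rightarrow> nat \<Rightarrow> nat \<Rightarrow> gnn_params" where
  "bf_theta L d K = \<lparr> Wagg = (\<lambda>l j i k. if l \<le> K \<and> i = 0
        then (if k = 0 then 1 else 0) + (if j = 1 \<and> k = dimh L d (l - 1) then 1 else 0) else 0),
     bagg = (\<lambda>l j i. 0),
     Wup = (\<lambda>l j i k. if i = 0 \<and> k = (if j = 1 \<and> K < l then d else 0) then 1 else 0),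
     bup = (\<lambda>l j i. 0) \<rparr>"

lemma sum_lessThan_single:
  assumes "a < c" "\<And>k. k \<noteq> a \<Longrightarrow> f k = 0"
  shows "(\<Sum>k<(c::nat). f k) = (f a :: real)"
proof -
  have "(\<Sum>k<c. f k) = (\<Sum>k\<in>{a}. f k)" by (rule sum.mono_neutral_right) (use assms in auto)
  then show ?thesis by simp
qed

lemma mlp_passes_coord0:
  assumes W: "\<And>j. 2 \<le> j \<Longrightarrow> j \<le> n \<Longrightarrow> W j = (\<lambda>i k. if i = 0 \<and> k = 0 then 1 else 0) \<and> b j = (\<lambda>i. 0)"
    and w: "\<And>j. 0 < w j" and first: "mlp w W b 1 x = (\<lambda>i. if i = 0 then v else 0)" and v: "0 \<le> v"
  shows "1 \<le> j \<Longrightarrow> j \<le> n \<Longrightarrow> mlp w W b j x = (\<lambda>i. if i = 0 then v else 0)"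
proof (induction j)
  case (Suc j)
  show ?case
  proof (cases "j = 0")
    case False
    then have IH: "mlp w W b j x = (\<lambda>i. if i = 0 then v else 0)" using Suc by simp
    have Wj: "W (Suc j) = (\<lambda>i k. if i = 0 \<and> k = 0 then 1 else 0)" "b (Suc j) = (\<lambda>i. 0)"
      using W Suc.prems False by auto
    have "(\<Sum>k<w j. W (Suc j) i k * mlp w W b j x k) = (if i = 0 then v else 0)" for i
      by (subst sum_lessThan_single[of 0]) (use w Wj IH in auto)
    then show ?thesis
      unfolding mlp.simps relu_layer_def using w[of "Suc j"] v by (auto simp: fun_eq_iff Wj(2))
  qed (use first in simp)
qed simp

lemma dimh_pos: "1 \<le> d \<Longrightarrow> 1 \<le> dimh L d l"
  by (simp add: dimh_def)

context
  fixes L d m K :: nat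
  assumes d1: "1 \<le> d" and m1: "1 \<le> m"
begin

lemma wagg_pos: "0 < wagg L d l j"
  using d1 by (simp add: wagg_def)

lemma wup_pos: "0 < wup L d m l j"
  using d1 by (simp add: wup_def dimh_def)

lemma f_agg_bf_theta:
  assumes "l \<le> K"
  shows "f_agg L d m (bf_theta L d K) l x = (\<lambda>i. if i = 0 then max 0 (x 0 + x (dimh L d (l - 1))) else 0)"
proof -
  define p where "p = dimh L d (l - 1)"
  have p1: "1 \<le> p" unfolding p_def by (rule dimh_pos[OF d1])
  have sum_row: "(\<Sum>k<p + 1. Wagg (bf_theta L d K) l 1 i k * x k) = (if i = 0 then x 0 + x p else 0)" for i
  proof (cases "i = 0")
    case True
    have "(\<Sum>k<p + 1. Wagg (bf_theta L d K) l 1 i k * x k)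
        = (\<Sum>k<p + 1. (if k = 0 then x k else 0) + (if k = p then x k else 0))"
      using True assms by (intro sum.cong) (auto simp: bf_theta_def p_def)
    also have "\<dots> = x 0 + x p" using p1 by (simp add: sum.distrib)
    finally show ?thesis using True by simp
  qed (simp add: bf_theta_def)
  have "relu_layer d (p + 1) (Wagg (bf_theta L d K) l 1) (bagg (bf_theta L d K) l 1) x
      = (\<lambda>i. if i = 0 then max 0 (x 0 + x p) else 0)"
    unfolding relu_layer_def sum_row using d1 by (auto simp: bf_theta_def fun_eq_iff)
  then have first: "mlp (wagg L d l) (Wagg (bf_theta L d K) l) (bagg (bf_theta L d K) l) 1 x
      = (\<lambda>i. if i = 0 then max 0 (x 0 + x p) else 0)"
    by (simp add: wagg_def p_def)
  show ?thesis unfolding f_agg_def p_def[symmetric]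
    by (rule mlp_passes_coord0[OF _ _ first, where n=m]) (use m1 wagg_pos assms in \<open>auto simp: bf_theta_def fun_eq_iff\<close>)
qed

lemma f_up_bf_theta:
  assumes "1 \<le> l"
  shows "f_up L d m (bf_theta L d K) l y = (\<lambda>i. if i = 0 then max 0 (y (if K < l then d else 0)) else 0)"
proof -
  define s where "s = (if K < l then d else 0)"
  have "s < wup L d m l 0" unfolding s_def using d1 dimh_pos[OF d1, of L "l - 1"] by (simp add: wup_def)
  then have sum_row: "(\<Sum>k<wup L d m l 0. Wup (bf_theta L d K) l 1 i k * y k) = (if i = 0 then y s else 0)" for i
    by (subst sum_lessThan_single[of s]) (auto simp: bf_theta_def s_def)
  have "relu_layer (wup L d m l 1) (wup L d m l 0) (Wup (bf_theta L d K) l 1) (bup (bf_theta L d K) l 1) y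
      = (\<lambda>i. if i = 0 then max 0 (y s) else 0)"
    unfolding relu_layer_def sum_row using wup_pos[of l 1] by (auto simp: bf_theta_def fun_eq_iff)
  then have first: "mlp (wup L d m l) (Wup (bf_theta L d K) l) (bup (bf_theta L d K) l) 1 y
      = (\<lambda>i. if i = 0 then max 0 (y s) else 0)"
    by simp
  show ?thesis unfolding f_up_def s_def[symmetric]
    by (rule mlp_passes_coord0[OF _ _ first, where n=m]) (use m1 wup_pos in \<open>auto simp: bf_theta_def fun_eq_iff\<close>)
qed

lemma gnn_h_bf_theta:
  assumes wf: "wf_graph G"
  shows "v \<in> verts G \<Longrightarrow>
    gnn_h L d m (bf_theta L d K) G l v = (\<lambda>i. if i = 0 then feat ((Gamma^^(min l K)) G) v else 0)"
proof (induction l arbitrary: v)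
  case (Suc l)
  let ?h = "gnn_h L d m (bf_theta L d K) G l"
  have nbhd: "nbhd G v \<subseteq> verts G" by (rule nbhd_subset_verts[OF wf_graph_adj_in_verts[OF wf] Suc.prems])
  have up: "gnn_h L d m (bf_theta L d K) G (Suc l) v = (\<lambda>i. if i = 0 then
      max 0 (vconcat d (agg_msg L d m (bf_theta L d K) G l v) (?h v) (if K < Suc l then d else 0)) else 0)"
    unfolding gnn_h_Suc_agg_msg by (rule f_up_bf_theta) simp
  show ?case
  proof (cases "Suc l \<le> K")
    case True
    have "f_agg L d m (bf_theta L d K) (Suc l) (vconcat (dimh L d l) (?h u) (\<lambda>k. if k = 0 then ef G u v else 0)) 0
        = feat ((Gamma^^l) G) u + ef G u v" if u: "u \<in> nbhd G v" for u
      using Suc.IH[of u] nbhd u True Gamma_pow_nonneg[OF wf, of u l] ef_nonneg[OF wf u]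
        f_agg_bf_theta[OF True] dimh_pos[OF d1, of L l]
      by (auto simp: vconcat_def)
    then have "agg_msg L d m (bf_theta L d K) G l v 0 = feat ((Gamma^^Suc l) G) v"
      unfolding agg_msg_def feat_Gamma_Suc by (intro arg_cong[where f=Min] image_cong) auto
    then show ?thesis
      unfolding up using True d1 Gamma_pow_nonneg[OF wf Suc.prems, of "Suc l"]
      by (simp add: vconcat_def fun_eq_iff max_def)
  next
    case False
    then show ?thesis
      unfolding up using Suc.IH[OF Suc.prems] Gamma_pow_nonneg[OF wf Suc.prems, of K]
      by (simp add: vconcat_def fun_eq_iff max_def)
  qed
qed (simp add: fun_eq_iff)

lemma nnz_up_bf_theta:
  assumes "j \<in> {1..m}"
  shows "nnz_mat (wup L d m l j) (wup L d m l (j - 1)) (Wup (bf_theta L d K) l j) = 1"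
proof -
  define s where "s = (if j = 1 \<and> K < l then d else 0)"
  have "s < wup L d m l (j - 1)" using d1 assms unfolding s_def by (auto simp: wup_def dimh_def)
  then have "{(i, k). i < wup L d m l j \<and> k < wup L d m l (j - 1) \<and> Wup (bf_theta L d K) l j i k \<noteq> 0} = {(0, s)}"
    using wup_pos[of l j] by (auto simp: bf_theta_def s_def)
  then show ?thesis unfolding nnz_mat_def by simp
qed

lemma nnz_agg_bf_theta:
  assumes j: "j \<in> {1..m}"
  shows "nnz_mat (wagg L d l j) (wagg L d l (j - 1)) (Wagg (bf_theta L d K) l j)
    = (if l \<le> K then (if j = 1 then 2 else 1) else 0)"
proof -
  define p where "p = dimh L d (l - 1)"
  have "1 \<le> p" unfolding p_def by (rule dimh_pos[OF d1])
  then have "{(i, k). i < wagg L d l j \<and> k < wagg L d l (j - 1) \<and> Wagg (bf_theta L d K) l j i k \<noteq> 0}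
      = (if l \<le> K then (if j = 1 then {(0, 0), (0, p)} else {(0, 0)}) else {})"
    using j d1 by (auto simp: bf_theta_def wagg_def p_def split: if_splits)
  then show ?thesis using \<open>1 \<le> p\<close> unfolding nnz_mat_def by simp
qed

lemma norm0_bf_theta:
  assumes "K \<le> L"
  shows "norm0 L d m (bf_theta L d K) = m*L + m*K + K"
proof -
  have up: "up_cost L d m (bf_theta L d K) l = m" for l
    unfolding up_cost_def using nnz_up_bf_theta by (simp add: nnz_vec_def bf_theta_def)
  have agg: "agg_cost L d m (bf_theta L d K) l = (if l \<le> K then m + 1 else 0)" for l
    unfolding agg_cost_def using nnz_agg_bf_theta sum_two_then_ones[OF m1]
    by (simp add: nnz_vec_def bf_theta_def)
  have "(\<Sum>l\<in>{1..L}. agg_cost L d m (bf_theta L d K) l) = (\<Sum>l\<in>{l\<in>{1..L}. l \<le> K}. m + 1)"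
    unfolding agg by (rule sum.inter_filter[symmetric]) simp
  also have "{l\<in>{1..L}. l \<le> K} = {1..K}" using assms by auto
  finally have "(\<Sum>l\<in>{1..L}. agg_cost L d m (bf_theta L d K) l) = (\<Sum>l\<in>{1..K}. m + 1)" .
  then show ?thesis unfolding norm0_eq_sum_costs up by (simp add: algebra_simps)
qed

end

section \<open>The regularised loss\<close>

lemma loss_MAE_nonneg: "0 \<le> loss_MAE \<beta> T L d m \<theta>"
  unfolding loss_MAE_def by (intro mult_nonneg_nonneg sum_nonneg) (auto simp: case_prod_beta)

lemma loss_MAE_bf_theta:
  assumes "train_set \<beta> K T" "K \<le> L" "1 \<le> d" "1 \<le> m"
  shows "loss_MAE \<beta> T L d m (bf_theta L d K) = 0"
proof -
  have "feat G' v = gnn_out L d m (bf_theta L d K) G v" if "(G, G') \<in> T" "v \<in> Vstar \<beta> G G'" for G G' v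
    using that assms gnn_h_bf_theta[OF assms(3,4), of G v L]
    by (auto simp: train_set_def bf_instance_def Vstar_def gnn_out_def min_absorb2)
  then show ?thesis unfolding loss_MAE_def by (auto intro!: sum.neutral)
qed

lemma loss_MAE_ge_if_outputs_collide:
  assumes "finite T" "(G, G') \<in> T" "finite (Vstar \<beta> G G')"
    and "a \<in> Vstar \<beta> G G'" "b \<in> Vstar \<beta> G G'" "a \<noteq> b"
    and "feat G' a = 0" "feat G' b = 1"
    and "gnn_out L d m \<theta> G a = gnn_out L d m \<theta> G b"
    and "0 < Mtot \<beta> T"
  shows "1 / real (Mtot \<beta> T) \<le> loss_MAE \<beta> T L d m \<theta>"
proof -
  define S where "S = (\<lambda>(G, G'). \<Sum>v\<in>Vstar \<beta> G G'. \<bar>feat G' v - gnn_out L d m \<theta> G v\<bar>)"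
  let ?o = "gnn_out L d m \<theta> G a"
  have "\<bar>0 - ?o\<bar> + \<bar>1 - ?o\<bar> = (\<Sum>v\<in>{a, b}. \<bar>feat G' v - gnn_out L d m \<theta> G v\<bar>)"
    using assms(6-9) by simp
  also have "\<dots> \<le> S (G, G')"
    using assms(3-5) unfolding S_def by (auto intro!: sum_mono2)
  also have "\<dots> \<le> sum S T"
    using assms(1,2) by (intro member_le_sum) (auto simp: S_def intro!: sum_nonneg)
  finally have "1 \<le> sum S T" by linarith
  then show ?thesis
    using assms(10) unfolding loss_MAE_def S_def by (simp add: divide_simps)
qed

text \<open>The edge \<open>{v\<^sub>0, u\<^sub>1}\<close> is a walk of weight \<open>1\<close>.\<close>

lemma beta_gt_1_if_H_copy:
  assumes "1 \<le> K" and f: "iso_map f G (H_graph K \<beta>)"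
    and short: "\<forall>xs. is_walk G xs \<and> distinct xs \<longrightarrow> walk_wt G xs < \<beta>"
  shows "1 < \<beta>"
proof -
  have bij: "bij_betw f (verts G) {0..2*K+1}" using f by (simp add: iso_map_def H_graph_simps)
  have "0 \<in> f ` verts G" "K + 2 \<in> f ` verts G"
    using bij_betw_imp_surj_on[OF bij] assms(1) by auto
  then obtain x y where xy: "x \<in> verts G" "f x = 0" "y \<in> verts G" "f y = K + 2"
    by (metis imageE)
  have "adj (H_graph K \<beta>) (f x) (f y)" "wt (H_graph K \<beta>) (f x) (f y) = 1"
    using xy assms(1) by (simp_all add: H_graph_simps H_idx_def)
  then have "adj G x y" "wt G x y = 1" using f xy by (auto simp: iso_map_def)
  then have "is_walk G [x, y]" "distinct [x, y]" "walk_wt G [x, y] = 1"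
    using xy by (auto simp: is_walk_def walk_wt_def less_Suc_eq)
  then show ?thesis using short by fastforce
qed

lemma H_copy_twins:
  assumes "1 \<le> K" "1 \<le> \<beta>" and wf: "wf_graph G" and f: "iso_map f G (H_graph K \<beta>)"
  obtains a b where "a \<in> verts G" "b \<in> verts G" "a \<noteq> b"
    "feat ((Gamma^^K) G) a = 0" "feat ((Gamma^^K) G) b = 1"
    "\<And>L d m \<theta>. 1 \<le> m \<Longrightarrow> deficient K L d m \<theta> \<Longrightarrow> gnn_out L d m \<theta> G a = gnn_out L d m \<theta> G b"
proof -
  have bij: "bij_betw f (verts G) {0..2*K+1}" using f by (simp add: iso_map_def H_graph_simps)
  have "K \<in> f ` verts G" "2*K+1 \<in> f ` verts G"
    using bij_betw_imp_surj_on[OF bij] by auto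
  then obtain a b where ab: "a \<in> verts G" "f a = K" "b \<in> verts G" "f b = 2*K+1"
    by (metis imageE)
  note iso = wf_graph_adj_in_verts[OF wf] adj_in_verts_H
  show ?thesis
  proof (rule that[OF ab(1,3)])
    show "a \<noteq> b" using ab by auto
    show "feat ((Gamma^^K) G) a = 0" "feat ((Gamma^^K) G) b = 1"
      using Gamma_pow_iso_map[OF f iso] Gamma_H_targets[OF assms(1,2)] ab by simp_all
    show "gnn_out L d m \<theta> G a = gnn_out L d m \<theta> G b" if "1 \<le> m" "deficient K L d m \<theta>" for L d m \<theta>
      using gnn_h_iso_map[OF f iso] gnn_out_H_twins_collide[OF that(1) _ that(2)] assms(2) ab
      by (simp add: gnn_out_def)
  qed
qed

lemma deficient_loss_MAE_ge:
  assumes "1 \<le> K" "1 \<le> m" "train_set \<beta> K T" "(G, G') \<in> T" "graph_iso G (H_graph K \<beta>)"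
    and short: "\<forall>xs. is_walk G xs \<and> distinct xs \<longrightarrow> walk_wt G xs < \<beta>"
  shows "0 < Mtot \<beta> T"
    and "deficient K L d m \<theta> \<Longrightarrow> 1 / real (Mtot \<beta> T) \<le> loss_MAE \<beta> T L d m \<theta>"
proof -
  obtain f where f: "iso_map f G (H_graph K \<beta>)" using assms(5) graph_iso_iff_iso_map by blast
  have b1: "1 < \<beta>" by (rule beta_gt_1_if_H_copy[OF assms(1) f short])
  have T: "finite T" "wf_graph G" "G' = (Gamma^^K) G"
    using assms(3,4) by (auto simp: train_set_def bf_instance_def)
  have finV: "finite (Vstar \<beta> G G')"
    using T(2) by (auto intro: finite_subset[of _ "verts G"] simp: Vstar_def wf_graph_def)
  obtain a b where ab: "a \<in> verts G" "b \<in> verts G" "a \<noteq> b"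
      "feat G' a = 0" "feat G' b = 1"
      "\<And>L d m \<theta>. 1 \<le> m \<Longrightarrow> deficient K L d m \<theta> \<Longrightarrow> gnn_out L d m \<theta> G a = gnn_out L d m \<theta> G b"
    using H_copy_twins[OF assms(1) _ T(2) f] b1 T(3) by auto
  have V: "a \<in> Vstar \<beta> G G'" "b \<in> Vstar \<beta> G G'" using ab b1 by (auto simp: Vstar_def)
  have "card (Vstar \<beta> G G') \<le> Mtot \<beta> T"
    unfolding Mtot_def using member_le_sum[OF assms(4), of "\<lambda>(G, G'). card (Vstar \<beta> G G')"] T(1) by simp
  then show M: "0 < Mtot \<beta> T" using V(1) finV card_gt_0_iff by fastforce
  show "1 / real (Mtot \<beta> T) \<le> loss_MAE \<beta> T L d m \<theta>" if "deficient K L d m \<theta>"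
    by (rule loss_MAE_ge_if_outputs_collide[OF T(1) assms(4) finV V ab(3-5) ab(6)[OF assms(2) that] M])
qed

lemma penalty_below_failure_cost:
  fixes \<eta> \<epsilon> :: real and M N :: nat
  assumes "0 < M" "1 \<le> N" "0 < \<eta>" "\<eta> < 1 / (2 * real M * real N)" "\<epsilon> < \<eta>"
  shows "\<eta> * real N + \<epsilon> < 1 / real M"
proof -
  have pos: "0 < 2 * real M * real N" using assms(1,2) by simp
  then have "\<eta> * (2 * real M * real N) < 1" using assms(4) pos_less_divide_eq[OF pos] by simp
  then have "2 * \<eta> * real N < 1 / real M" using assms(1) by (simp add: pos_less_divide_eq mult_ac)
  moreover have "\<eta> \<le> \<eta> * real N" using assms(2,3) by simp
  ultimately show ?thesis using assms(5) by linarith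
qed

lemma l0_penalised_minimum:
  fixes loss :: "'a \<Rightarrow> real" and cnt :: "'a \<Rightarrow> nat" and N :: nat and \<eta> \<epsilon> c :: real
  assumes nonneg: "\<And>\<theta>. 0 \<le> loss \<theta>"
    and fail: "\<And>\<theta>. P \<theta> \<Longrightarrow> c \<le> loss \<theta>"
    and sound: "\<And>\<theta>. \<not> P \<theta> \<Longrightarrow> N \<le> cnt \<theta>"
    and "0 < \<eta>" "0 \<le> \<epsilon>" "\<epsilon> < \<eta>" and gap: "\<eta> * N + \<epsilon> < c"
  shows "\<eta> * N \<le> loss \<theta> + \<eta> * cnt \<theta>"
    and "loss \<theta> + \<eta> * cnt \<theta> \<le> \<eta> * N + \<epsilon> \<Longrightarrow> \<not> P \<theta> \<and> cnt \<theta> = N"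
proof -
  have "\<eta> * N \<le> \<eta> * cnt \<theta>" if "\<not> P \<theta>" using sound[OF that] \<open>0 < \<eta>\<close> by simp
  moreover have fail_cost: "c \<le> loss \<theta> + \<eta> * cnt \<theta>" if "P \<theta>"
    using fail[OF that] \<open>0 < \<eta>\<close> by (simp add: add_increasing2)
  ultimately show "\<eta> * N \<le> loss \<theta> + \<eta> * cnt \<theta>" using nonneg[of \<theta>] gap \<open>0 \<le> \<epsilon>\<close> by force
  assume le: "loss \<theta> + \<eta> * cnt \<theta> \<le> \<eta> * N + \<epsilon>"
  then have "\<not> P \<theta>" using fail_cost gap by force
  moreover have "\<eta> * cnt \<theta> < \<eta> * (N + 1)"
    using le nonneg[of \<theta>] \<open>\<epsilon> < \<eta>\<close> by (simp add: algebra_simps)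
  then have "cnt \<theta> < N + 1" using \<open>0 < \<eta>\<close> by (simp del: of_nat_Suc)
  ultimately show "\<not> P \<theta> \<and> cnt \<theta> = N" using sound by fastforce
qed

theorem mainTheorem10:
  fixes K L m d :: nat and \<beta> \<eta> \<epsilon> :: real and T :: "(wgraph \<times> wgraph) set"
  assumes "K \<ge> 1" and "L \<ge> K" and "m \<ge> 1" and "d \<ge> 1"
    and "\<beta> > 0"
    and beta_large: "\<forall>(G, G')\<in>T. \<forall>xs. is_walk G xs \<and> distinct xs \<longrightarrow> walk_wt G xs < \<beta>"
    and "train_set \<beta> K T"
    and "\<exists>(G, G')\<in>T. graph_iso G (H_graph K \<beta>)"
    and "\<exists>(G, G')\<in>T. graph_iso G (path_graph \<beta> 0 [1])"
    and "0 < \<eta>"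
    and "\<eta> < 1 / (2 * real (Mtot \<beta> T) * real (m*L + m*K + K))"
    and "0 \<le> \<epsilon>" and "\<epsilon> < \<eta>"
  shows "(\<exists>\<theta>. loss_reg \<eta> \<beta> T L d m \<theta> = \<eta> * real (m*L + m*K + K))
       \<and> (\<forall>\<theta>. loss_reg \<eta> \<beta> T L d m \<theta> \<ge> \<eta> * real (m*L + m*K + K))
       \<and> (\<forall>\<theta>. loss_reg \<eta> \<beta> T L d m \<theta> \<le> \<eta> * real (m*L + m*K + K) + \<epsilon> \<longrightarrow>
            norm0 L d m \<theta> = m*L + m*K + K
          \<and> card {l\<in>{1..L}. msg_passing L d m \<theta> l} = K
          \<and> (\<forall>l\<in>{1..L}. msg_passing L d m \<theta> l \<longrightarrow> edge_dep_msg_passing L d m \<theta> l)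
          \<and> (\<forall>l\<in>{1..L}. \<not> constant_on_nonneg (wup L d m l 0) (f_up L d m \<theta> l))
          \<and> (\<forall>l\<in>{1..L}. \<forall>j\<in>{1..m}.
                (\<forall>i<wup L d m l j. bup \<theta> l j i = 0) \<and> (\<forall>i<wagg L d l j. bagg \<theta> l j i = 0))
          \<and> (\<forall>l\<in>{1..L}. \<forall>j\<in>{1..m}. nnz_mat (wup L d m l j) (wup L d m l (j - 1)) (Wup \<theta> l j) = 1)
          \<and> (\<forall>l\<in>{1..L}. msg_passing L d m \<theta> l \<longrightarrow>
                nnz_mat (wagg L d l 1) (wagg L d l 0) (Wagg \<theta> l 1) = 2
              \<and> (\<exists>r. \<forall>i k. i < wagg L d l 1 \<and> k < wagg L d l 0 \<and> Wagg \<theta> l 1 i k \<noteq> 0 \<longrightarrow> i = r)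
              \<and> (\<forall>j\<in>{2..m}. nnz_mat (wagg L d l j) (wagg L d l (j - 1)) (Wagg \<theta> l j) = 1)))"
proof -
  obtain G G' where G: "(G, G') \<in> T" "graph_iso G (H_graph K \<beta>)" using assms(8) by blast
  have short: "\<forall>xs. is_walk G xs \<and> distinct xs \<longrightarrow> walk_wt G xs < \<beta>" using beta_large G(1) by blast
  note failure = deficient_loss_MAE_ge[OF assms(1,3,7) G short]
  have "1 \<le> m*L + m*K + K" using assms(1) by simp
  note gap = penalty_below_failure_cost[OF failure(1) this assms(10,11,13)]
  note l0 = l0_penalised_minimum[where loss = "loss_MAE \<beta> T L d m" and cnt = "norm0 L d m"
      and P = "deficient K L d m", OF loss_MAE_nonneg failure(2) norm0_ge[OF assms(3)] assms(10,12,13) gap]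
  have "loss_reg \<eta> \<beta> T L d m (bf_theta L d K) = \<eta> * real (m*L + m*K + K)"
    using loss_MAE_bf_theta[OF assms(7,2,4,3)] norm0_bf_theta[OF assms(4,3,2)] by (simp add: loss_reg_def)
  then show ?thesis
    using l0 tight_structure[OF assms(3)] unfolding loss_reg_def by blast
qed

end
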